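(* In the setting of the context, assume that Condition UI holds: $\mathcal{Q}$ is uniformly integrable and, for every $i\in\{1,\dots,d\}$, the set $R^i\mathcal{Q} := \{R^iZ : Z\in\mathcal{Q}\}$ is uniformly integrable. Let $\overline{\mathcal{Q}}$ be the $L^1$-closure of $\mathcal{Q}$. Then the following are equivalent: (a) the market does not admit strong $\rho$-arbitrage; (b) $\overline{\mathcal{Q}}\cap\mathcal{M}\ne\emptyset$.
   Context: Let $(\Omega,\mathcal{F},\mathbb{P})$ be a probability space and a market: riskless asset $S^0_0=1$, $S^0_1=1+r$, $r>-1$; risky assets $S^1,\dots,S^d$ with constants $S^i_0>0$ and real-valued $\mathcal{F}$-measurable $S^i_1$; returns $R^i:=(S^i_1-S^i_0)/S^i_0$. Standing assumptions: nonredundancy (if $\theta\in\mathbb{R}^{1+d}$ with $\sum_{i=0}^d\theta^iS^i_t=0$ a.s. for $t\in\{0,1\}$ then $\theta=0$), $R^i\in L^1$, $\mathbb{E}[R^i]\ne r$ for some $i$. Excess return of $\pi\in\mathbb{R}^d$: $X_\pi:=\pi\cdot(R-r\mathbf{1})$. Let $L$ be a Riesz space with $L^\infty\subset L\subset L^1$ containing all $X_\pi$. $\mathcal{D}:=\{Z\in L^1: Z\ge0 \text{ a.s.}, \mathbb{E}[Z]=1\}$. $\mathcal{Q}\subset\mathcal{D}$ is convex with $1\in\mathcal{Q}$, and $\rho:L\to(-\infty,\infty]$ is given by $\rho(X)=\sup_{Z\in\mathcal{Q}}\mathbb{E}[-ZX]$, where $\mathbb{E}[-ZX]:=\mathbb{E}[ZX^-]-\mathbb{E}[ZX^+]$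 with the convention $\mathbb{E}[-ZX]=\infty$ if $\mathbb{E}[ZX^-]=\infty$. $\mathcal{M}:=\{Z\in\mathcal{D}:\mathbb{E}[Z(R^i-r)]=0 \text{ for all } i\}$. Strong $\rho$-arbitrage: for every $\pi\in\mathbb{R}^d$ there is $\pi'$ with $\mathbb{E}[X_{\pi'}]>\mathbb{E}[X_\pi]$ and $\rho(X_{\pi'})<\rho(X_\pi)$. *)

theory Defs
  imports "HOL-Probability.Probability"
begin

definition ret :: "(nat \<Rightarrow> real) \<Rightarrow> (nat \<Rightarrow> 'a \<Rightarrow> real) \<Rightarrow> nat \<Rightarrow> 'a \<Rightarrow> real" where
  "ret S0 S1 i \<omega> = (S1 i \<omega> - S0 i) / S0 i"

definition excess :: "nat \<Rightarrow> real \<Rightarrow> (nat \<Rightarrow> 'a \<Rightarrow> real) \<Rightarrow> (nat \<Rightarrow> real) \<Rightarrow> 'a \<Rightarrow> real" where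
  "excess d r R \<pi> \<omega> = (\<Sum>i\<in>{1..d}. \<pi> i * (R i \<omega> - r))"

text \<open>Nonredundancy of the market (theta indexed by 0..d, asset 0 riskless).\<close>
definition nonredundant :: "'a measure \<Rightarrow> nat \<Rightarrow> real \<Rightarrow> (nat \<Rightarrow> real) \<Rightarrow> (nat \<Rightarrow> 'a \<Rightarrow> real) \<Rightarrow> bool" where
  "nonredundant M d r S0 S1 \<longleftrightarrow>
     (\<forall>\<theta>::nat \<Rightarrow> real.
        (\<theta> 0 + (\<Sum>i\<in>{1..d}. \<theta> i * S0 i) = 0 \<and>
         (AE \<omega> in M. \<theta> 0 * (1 + r) + (\<Sum>i\<in>{1..d}. \<theta> i * S1 i \<omega>) = 0))
        \<longrightarrow> (\<forall>i\<le>d. \<theta> i = 0))"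

definition densities :: "'a measure \<Rightarrow> ('a \<Rightarrow> real) set" where
  "densities M = {Z. integrable M Z \<and> (AE \<omega> in M. Z \<omega> \<ge> 0) \<and> integral\<^sup>L M Z = 1}"

definition mart_densities :: "'a measure \<Rightarrow> nat \<Rightarrow> real \<Rightarrow> (nat \<Rightarrow> 'a \<Rightarrow> real) \<Rightarrow> ('a \<Rightarrow> real) set" where
  "mart_densities M d r R = {Z \<in> densities M.
      \<forall>i\<in>{1..d}. integrable M (\<lambda>\<omega>. Z \<omega> * (R i \<omega> - r)) \<and>
                 (\<integral>\<omega>. Z \<omega> * (R i \<omega> - r) \<partial>M) = 0}"

text \<open>E[-ZX] := E[Z X^-] - E[Z X^+], with value +infinity whenever E[Z X^-] = infinity.\<close>
definition neg_exp :: "'a measure \<Rightarrow> ('a \<Rightarrow> real) \<Rightarrow> ('a \<Rightarrow> real) \<Rightarrow> ereal" where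
  "neg_exp M Z X =
     (let a = (\<integral>\<^sup>+ \<omega>. ennreal (Z \<omega> * max (- X \<omega>) 0) \<partial>M);
          b = (\<integral>\<^sup>+ \<omega>. ennreal (Z \<omega> * max (X \<omega>) 0) \<partial>M)
      in if a = \<infinity> then \<infinity> else enn2ereal a - enn2ereal b)"

definition rho :: "'a measure \<Rightarrow> ('a \<Rightarrow> real) set \<Rightarrow> ('a \<Rightarrow> real) \<Rightarrow> ereal" where
  "rho M Q X = (SUP Z\<in>Q. neg_exp M Z X)"

definition strong_rho_arbitrage :: "'a measure \<Rightarrow> ('a \<Rightarrow> real) set \<Rightarrow> nat \<Rightarrow> real \<Rightarrow> (nat \<Rightarrow> 'a \<Rightarrow> real) \<Rightarrow> bool" where
  "strong_rho_arbitrage M Q d r R \<longleftrightarrow>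
     (\<forall>\<pi>::nat \<Rightarrow> real. \<exists>\<pi>'::nat \<Rightarrow> real.
        (\<integral>\<omega>. excess d r R \<pi>' \<omega> \<partial>M) > (\<integral>\<omega>. excess d r R \<pi> \<omega> \<partial>M) \<and>
        rho M Q (excess d r R \<pi>') < rho M Q (excess d r R \<pi>))"

definition unif_integrable :: "'a measure \<Rightarrow> ('a \<Rightarrow> real) set \<Rightarrow> bool" where
  "unif_integrable M F \<longleftrightarrow>
     (\<forall>f\<in>F. integrable M f) \<and>
     (\<forall>e>0. \<exists>c. \<forall>f\<in>F. (\<integral>\<omega>. (if \<bar>f \<omega>\<bar> > c then \<bar>f \<omega>\<bar> else 0) \<partial>M) \<le> e)"

definition L1_closure :: "'a measure \<Rightarrow> ('a \<Rightarrow> real) set \<Rightarrow> ('a \<Rightarrow> real) set" where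
  "L1_closure M Q = {Z. integrable M Z \<and>
      (\<forall>e>0. \<exists>Y\<in>Q. (\<integral>\<omega>. \<bar>Z \<omega> - Y \<omega>\<bar> \<partial>M) < e)}"

end

theory Submission
  imports Defs
begin

(* For a density Y in Q write v(Y) = (E[Y (R^i - r)])_i for the expected excess returns under Y.
   Then E[-Y X_pi] = - pi . v(Y), so rho(X_pi) = sup_{Y in Q} - pi . v(Y), and uniform integrability
   makes v(Q) a bounded convex subset of R^d.

   If |v| is bounded away from 0 on Q, a point p of v(Q) of almost minimal norm satisfies
   p . v(Y) >= m > 0 on all of Q; adding p to any portfolio raises the mean excess return and lowers
   rho by m, a strong rho-arbitrage. Otherwise the convex sets K_n = {Y in Q. |v(Y)|^2 <= 1/(n+1)}
   decrease and are nonempty. The functional Y |-> E[1/(1 + |Y|)] is convex on nonnegative functions,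
   and below a cut-off its midpoint defect dominates the squared distance; as uniform integrability
   controls the values above the cut-off, near-minimisers of this functional on K_n form an L1-Cauchy
   sequence, and its limit is a martingale density in the L1-closure of Q.

   Conversely, if Y_n -> Z in L1 for a martingale density Z, uniform integrability of R^i Q gives
   v(Y_n) -> v(Z) = 0, hence rho(X_pi) >= 0 = rho(X_0) for every pi, and pi = 0 admits no improvement. *)

section \<open>Uniform integrability\<close>

lemma integrable_tail:
  fixes f :: "'a \<Rightarrow> real"
  assumes "integrable M f"
  shows "integrable M (\<lambda>\<omega>. if \<bar>f \<omega>\<bar> > c then \<bar>f \<omega>\<bar> else 0)"
proof (rule Bochner_Integration.integrable_bound[OF integrable_abs[OF assms]])
  have [measurable]: "f \<in> borel_measurable M" using assms by simp
  show "(\<lambda>\<omega>. if \<bar>f \<omega>\<bar> > c then \<bar>f \<omega>\<bar> else 0) \<in> borel_measurable M"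
    by measurable
qed auto

lemma unif_integrable_subset: "unif_integrable M G \<Longrightarrow> F \<subseteq> G \<Longrightarrow> unif_integrable M F"
  unfolding unif_integrable_def by (meson subsetD)

lemma unif_integrable_singleton:
  fixes f :: "'a \<Rightarrow> real"
  assumes "integrable M f"
  shows "unif_integrable M {f}"
proof -
  have "(\<lambda>n. \<integral>\<omega>. (if \<bar>f \<omega>\<bar> > real n then \<bar>f \<omega>\<bar> else 0) \<partial>M) \<longlonglongrightarrow> (\<integral>\<omega>. 0 \<partial>M)"
  proof (rule integral_dominated_convergence[where w="\<lambda>\<omega>. \<bar>f \<omega>\<bar>"])
    show "AE \<omega> in M. (\<lambda>n. if \<bar>f \<omega>\<bar> > real n then \<bar>f \<omega>\<bar> else 0) \<longlonglongrightarrow> 0"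
    proof (rule AE_I2)
      fix \<omega>
      have "eventually (\<lambda>n. real n \<ge> \<bar>f \<omega>\<bar>) sequentially"
        using filterlim_real_sequentially by (simp add: filterlim_at_top)
      then show "(\<lambda>n. if \<bar>f \<omega>\<bar> > real n then \<bar>f \<omega>\<bar> else 0) \<longlonglongrightarrow> 0"
        by (rule tendsto_eventually[OF eventually_mono]) auto
    qed
  qed (use assms in auto)
  then have tails: "(\<lambda>n. \<integral>\<omega>. (if \<bar>f \<omega>\<bar> > real n then \<bar>f \<omega>\<bar> else 0) \<partial>M) \<longlonglongrightarrow> 0"
    by simp
  have "\<exists>c. (\<integral>\<omega>. (if \<bar>f \<omega>\<bar> > c then \<bar>f \<omega>\<bar> else 0) \<partial>M) \<le> e" if e: "e > 0" for e
  proof -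
    obtain n where "(\<integral>\<omega>. (if \<bar>f \<omega>\<bar> > real n then \<bar>f \<omega>\<bar> else 0) \<partial>M) < e"
      using order_tendstoD(2)[OF tails e] by (auto simp: eventually_sequentially)
    then show ?thesis by (intro exI[of _ "real n"]) simp
  qed
  then show ?thesis
    unfolding unif_integrable_def using assms by blast
qed

lemma abs_integral_mult_diff_le:
  fixes W Y Z :: "'a \<Rightarrow> real"
  assumes A: "A \<in> sets M" and c: "0 \<le> c" "\<And>\<omega>. \<omega> \<in> space M - A \<Longrightarrow> \<bar>W \<omega>\<bar> \<le> c"
    and int: "integrable M Y" "integrable M Z"
      "integrable M (\<lambda>\<omega>. W \<omega> * Y \<omega>)" "integrable M (\<lambda>\<omega>. W \<omega> * Z \<omega>)"
  shows "\<bar>(\<integral>\<omega>. W \<omega> * Y \<omega> \<partial>M) - (\<integral>\<omega>. W \<omega> * Z \<omega> \<partial>M)\<bar>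
    \<le> c * (\<integral>\<omega>. \<bar>Y \<omega> - Z \<omega>\<bar> \<partial>M)
      + (\<integral>\<omega>. \<bar>W \<omega> * Y \<omega>\<bar> * indicator A \<omega> \<partial>M) + (\<integral>\<omega>. \<bar>W \<omega> * Z \<omega>\<bar> * indicator A \<omega> \<partial>M)"
proof -
  have ind: "integrable M (\<lambda>\<omega>. \<bar>f \<omega>\<bar> * indicator A \<omega>)" if "integrable M f" for f :: "'a \<Rightarrow> real"
    using integrable_mult_indicator[OF A integrable_abs[OF that]] by (simp add: mult.commute)
  have "\<bar>(\<integral>\<omega>. W \<omega> * Y \<omega> \<partial>M) - (\<integral>\<omega>. W \<omega> * Z \<omega> \<partial>M)\<bar> = \<bar>\<integral>\<omega>. W \<omega> * Y \<omega> - W \<omega> * Z \<omega> \<partial>M\<bar>"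
    using int by simp
  also have "\<dots> \<le> (\<integral>\<omega>. \<bar>W \<omega> * Y \<omega> - W \<omega> * Z \<omega>\<bar> \<partial>M)"
    by (rule integral_abs_bound)
  also have "\<dots> \<le> (\<integral>\<omega>. c * \<bar>Y \<omega> - Z \<omega>\<bar> + \<bar>W \<omega> * Y \<omega>\<bar> * indicator A \<omega> + \<bar>W \<omega> * Z \<omega>\<bar> * indicator A \<omega> \<partial>M)"
  proof (rule integral_mono)
    show "integrable M (\<lambda>\<omega>. c * \<bar>Y \<omega> - Z \<omega>\<bar> + \<bar>W \<omega> * Y \<omega>\<bar> * indicator A \<omega> + \<bar>W \<omega> * Z \<omega>\<bar> * indicator A \<omega>)"
      using int by (intro Bochner_Integration.integrable_add ind) auto
    fix \<omega> assume \<omega>: "\<omega> \<in> space M"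
    show "\<bar>W \<omega> * Y \<omega> - W \<omega> * Z \<omega>\<bar> \<le> c * \<bar>Y \<omega> - Z \<omega>\<bar> + \<bar>W \<omega> * Y \<omega>\<bar> * indicator A \<omega> + \<bar>W \<omega> * Z \<omega>\<bar> * indicator A \<omega>"
    proof (cases "\<omega> \<in> A")
      case True
      have "\<bar>W \<omega> * Y \<omega> - W \<omega> * Z \<omega>\<bar> \<le> \<bar>W \<omega> * Y \<omega>\<bar> + \<bar>W \<omega> * Z \<omega>\<bar>"
        by (rule abs_triangle_ineq4)
      moreover have "0 \<le> c * \<bar>Y \<omega> - Z \<omega>\<bar>" using c(1) by simp
      ultimately show ?thesis using True by simp
    next
      case False
      then have "\<bar>W \<omega> * Y \<omega> - W \<omega> * Z \<omega>\<bar> = \<bar>W \<omega>\<bar> * \<bar>Y \<omega> - Z \<omega>\<bar>"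
        by (simp add: right_diff_distrib[symmetric] abs_mult)
      also have "\<dots> \<le> c * \<bar>Y \<omega> - Z \<omega>\<bar>"
        using c(2) \<omega> False by (intro mult_right_mono) auto
      finally show ?thesis using False by simp
    qed
  qed (use int in auto)
  also have "\<dots> = c * (\<integral>\<omega>. \<bar>Y \<omega> - Z \<omega>\<bar> \<partial>M)
      + (\<integral>\<omega>. \<bar>W \<omega> * Y \<omega>\<bar> * indicator A \<omega> \<partial>M) + (\<integral>\<omega>. \<bar>W \<omega> * Z \<omega>\<bar> * indicator A \<omega> \<partial>M)"
    using int by (simp add: ind)
  finally show ?thesis .
qed

lemma measure_abs_ge_less:
  fixes W :: "'a \<Rightarrow> real"
  assumes W: "integrable M W" and "\<delta> > 0"
  obtains c where "c > 0" "measure M {\<omega>\<in>space M. c \<le> \<bar>W \<omega>\<bar>} < \<delta>"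
proof -
  define I where "I = (\<integral>\<omega>. \<bar>W \<omega>\<bar> \<partial>M)"
  have "I \<ge> 0" unfolding I_def by simp
  define c where "c = (I + 1) / \<delta>"
  have "c > 0" unfolding c_def using \<open>\<delta> > 0\<close> \<open>I \<ge> 0\<close> by simp
  have "measure M {\<omega>\<in>space M. c \<le> \<bar>W \<omega>\<bar>} \<le> I / c"
    unfolding I_def using W \<open>c > 0\<close> by (intro integral_Markov_inequality_measure[where A="space M"]) auto
  also have "\<dots> = \<delta> * (I / (I + 1))"
    unfolding c_def using \<open>\<delta> > 0\<close> \<open>I \<ge> 0\<close> by (simp add: field_simps)
  also have "\<dots> < \<delta> * 1"
    using \<open>\<delta> > 0\<close> \<open>I \<ge> 0\<close> by (intro mult_strict_left_mono) auto
  finally have "measure M {\<omega>\<in>space M. c \<le> \<bar>W \<omega>\<bar>} < \<delta>" by simp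
  with \<open>c > 0\<close> show ?thesis by (rule that)
qed

context finite_measure
begin

lemma unif_integrable_L1_bounded:
  assumes "unif_integrable M F"
  shows "\<exists>B. \<forall>f\<in>F. (\<integral>\<omega>. \<bar>f \<omega>\<bar> \<partial>M) \<le> B"
proof -
  obtain c where c: "\<forall>f\<in>F. (\<integral>\<omega>. (if \<bar>f \<omega>\<bar> > c then \<bar>f \<omega>\<bar> else 0) \<partial>M) \<le> 1"
    using assms unfolding unif_integrable_def by (meson zero_less_one)
  have "(\<integral>\<omega>. \<bar>f \<omega>\<bar> \<partial>M) \<le> \<bar>c\<bar> * measure M (space M) + 1" if f: "f \<in> F" for f
  proof -
    have fi: "integrable M f" using f assms unfolding unif_integrable_def by auto
    have "(\<integral>\<omega>. \<bar>f \<omega>\<bar> \<partial>M) \<le> (\<integral>\<omega>. \<bar>c\<bar> + (if \<bar>f \<omega>\<bar> > c then \<bar>f \<omega>\<bar> else 0) \<partial>M)"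
      by (rule integral_mono) (auto intro!: fi integrable_tail)
    also have "\<dots> = \<bar>c\<bar> * measure M (space M) + (\<integral>\<omega>. (if \<bar>f \<omega>\<bar> > c then \<bar>f \<omega>\<bar> else 0) \<partial>M)"
      by (subst Bochner_Integration.integral_add) (auto intro!: fi integrable_tail)
    finally show ?thesis using c f by auto
  qed
  then show ?thesis by blast
qed

lemma unif_integrable_small_on_small_sets:
  assumes "unif_integrable M F" "e > 0"
  shows "\<exists>\<delta>>0. \<forall>A\<in>sets M. measure M A < \<delta> \<longrightarrow> (\<forall>f\<in>F. (\<integral>\<omega>. \<bar>f \<omega>\<bar> * indicator A \<omega> \<partial>M) \<le> e)"
proof -
  obtain c where c: "\<forall>f\<in>F. (\<integral>\<omega>. (if \<bar>f \<omega>\<bar> > c then \<bar>f \<omega>\<bar> else 0) \<partial>M) \<le> e/2"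
    using assms unfolding unif_integrable_def by (meson half_gt_zero)
  define \<delta> where "\<delta> = e / (2 * (\<bar>c\<bar> + 1))"
  have "\<delta> > 0" unfolding \<delta>_def using assms(2) by (simp add: add_pos_nonneg)
  have "(\<integral>\<omega>. \<bar>f \<omega>\<bar> * indicator A \<omega> \<partial>M) \<le> e"
    if A: "A \<in> sets M" "measure M A < \<delta>" and f: "f \<in> F" for A f
  proof -
    have fi: "integrable M f" using f assms unfolding unif_integrable_def by auto
    have "(\<integral>\<omega>. \<bar>f \<omega>\<bar> * indicator A \<omega> \<partial>M)
        \<le> (\<integral>\<omega>. (if \<bar>f \<omega>\<bar> > c then \<bar>f \<omega>\<bar> else 0) + \<bar>c\<bar> * indicator A \<omega> \<partial>M)"
    proof (rule integral_mono)
      show "integrable M (\<lambda>\<omega>. \<bar>f \<omega>\<bar> * indicator A \<omega>)"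
        using integrable_mult_indicator[OF A(1) integrable_abs[OF fi]] by (simp add: mult.commute)
      show "integrable M (\<lambda>\<omega>. (if \<bar>f \<omega>\<bar> > c then \<bar>f \<omega>\<bar> else 0) + \<bar>c\<bar> * indicator A \<omega>)"
        using A(1) by (intro Bochner_Integration.integrable_add integrable_tail fi integrable_mult_right
            integrable_real_indicator) (auto simp: less_top[symmetric])
    qed (auto simp: indicator_def)
    also have "\<dots> = (\<integral>\<omega>. (if \<bar>f \<omega>\<bar> > c then \<bar>f \<omega>\<bar> else 0) \<partial>M) + \<bar>c\<bar> * measure M A"
      using A(1) by (subst Bochner_Integration.integral_add)
        (auto intro!: fi integrable_tail integrable_real_indicator simp: less_top[symmetric])
    also have "\<dots> \<le> e/2 + \<bar>c\<bar> * \<delta>"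
      using c f A by (intro add_mono mult_left_mono) auto
    also have "\<bar>c\<bar> * \<delta> \<le> e/2"
      unfolding \<delta>_def using assms(2) by (simp add: field_simps)
    finally show ?thesis by simp
  qed
  then show ?thesis using \<open>\<delta> > 0\<close> by blast
qed

lemma integral_mult_tendsto_of_L1_tendsto:
  fixes W Z :: "'a \<Rightarrow> real" and Y :: "nat \<Rightarrow> 'a \<Rightarrow> real"
  assumes W: "integrable M W" and Z: "integrable M Z" "integrable M (\<lambda>\<omega>. W \<omega> * Z \<omega>)"
    and Y: "\<And>n. integrable M (Y n)" and UI: "unif_integrable M (range (\<lambda>n \<omega>. W \<omega> * Y n \<omega>))"
    and lim: "(\<lambda>n. \<integral>\<omega>. \<bar>Y n \<omega> - Z \<omega>\<bar> \<partial>M) \<longlonglongrightarrow> 0"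
  shows "(\<lambda>n. \<integral>\<omega>. W \<omega> * Y n \<omega> \<partial>M) \<longlonglongrightarrow> (\<integral>\<omega>. W \<omega> * Z \<omega> \<partial>M)"
proof (rule LIMSEQ_I)
  fix e :: real assume "e > 0"
  then have e3: "e/3 > 0" by simp
  obtain \<delta>1 where "\<delta>1 > 0" and \<delta>1: "\<And>A n. A \<in> sets M \<Longrightarrow> measure M A < \<delta>1 \<Longrightarrow>
      (\<integral>\<omega>. \<bar>W \<omega> * Y n \<omega>\<bar> * indicator A \<omega> \<partial>M) \<le> e/3"
    using unif_integrable_small_on_small_sets[OF UI e3] by auto
  obtain \<delta>2 where "\<delta>2 > 0" and \<delta>2: "\<And>A. A \<in> sets M \<Longrightarrow> measure M A < \<delta>2 \<Longrightarrow>
      (\<integral>\<omega>. \<bar>W \<omega> * Z \<omega>\<bar> * indicator A \<omega> \<partial>M) \<le> e/3"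
    using unif_integrable_small_on_small_sets[OF unif_integrable_singleton[OF Z(2)] e3] by auto
  \<comment> \<open>Off the set A where W is large, W Y_n - W Z is controlled by the L1 distance;
    on A, by uniform integrability.\<close>
  obtain c where "c > 0" and small: "measure M {\<omega>\<in>space M. c \<le> \<bar>W \<omega>\<bar>} < min \<delta>1 \<delta>2"
    using measure_abs_ge_less[OF W] \<open>\<delta>1 > 0\<close> \<open>\<delta>2 > 0\<close> by (metis min_less_iff_conj)
  define A where "A = {\<omega>\<in>space M. c \<le> \<bar>W \<omega>\<bar>}"
  have [measurable]: "W \<in> borel_measurable M" using W by simp
  have "A \<in> sets M" unfolding A_def by measurable
  have bound: "\<bar>(\<integral>\<omega>. W \<omega> * Y n \<omega> \<partial>M) - (\<integral>\<omega>. W \<omega> * Z \<omega> \<partial>M)\<bar>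
      \<le> c * (\<integral>\<omega>. \<bar>Y n \<omega> - Z \<omega>\<bar> \<partial>M) + e/3 + e/3" for n
  proof -
    have "integrable M (\<lambda>\<omega>. W \<omega> * Y n \<omega>)"
      using UI unfolding unif_integrable_def by auto
    then have "\<bar>(\<integral>\<omega>. W \<omega> * Y n \<omega> \<partial>M) - (\<integral>\<omega>. W \<omega> * Z \<omega> \<partial>M)\<bar>
        \<le> c * (\<integral>\<omega>. \<bar>Y n \<omega> - Z \<omega>\<bar> \<partial>M)
          + (\<integral>\<omega>. \<bar>W \<omega> * Y n \<omega>\<bar> * indicator A \<omega> \<partial>M) + (\<integral>\<omega>. \<bar>W \<omega> * Z \<omega>\<bar> * indicator A \<omega> \<partial>M)"
      using \<open>A \<in> sets M\<close> \<open>c > 0\<close> Y Z by (intro abs_integral_mult_diff_le) (auto simp: A_def)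
    moreover have "(\<integral>\<omega>. \<bar>W \<omega> * Y n \<omega>\<bar> * indicator A \<omega> \<partial>M) \<le> e/3"
      using \<delta>1 \<open>A \<in> sets M\<close> small unfolding A_def by simp
    moreover have "(\<integral>\<omega>. \<bar>W \<omega> * Z \<omega>\<bar> * indicator A \<omega> \<partial>M) \<le> e/3"
      using \<delta>2 \<open>A \<in> sets M\<close> small unfolding A_def by simp
    ultimately show ?thesis by linarith
  qed
  have "(\<lambda>n. c * (\<integral>\<omega>. \<bar>Y n \<omega> - Z \<omega>\<bar> \<partial>M)) \<longlonglongrightarrow> 0"
    using tendsto_mult_right_zero[OF lim] .
  from order_tendstoD(2)[OF this e3]
  obtain N where "\<And>n. n \<ge> N \<Longrightarrow> c * (\<integral>\<omega>. \<bar>Y n \<omega> - Z \<omega>\<bar> \<partial>M) < e/3"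
    unfolding eventually_sequentially by blast
  then have "norm ((\<integral>\<omega>. W \<omega> * Y n \<omega> \<partial>M) - (\<integral>\<omega>. W \<omega> * Z \<omega> \<partial>M)) < e" if "n \<ge> N" for n
    using bound[of n] that by fastforce
  then show "\<exists>N. \<forall>n\<ge>N. norm ((\<integral>\<omega>. W \<omega> * Y n \<omega> \<partial>M) - (\<integral>\<omega>. W \<omega> * Z \<omega> \<partial>M)) < e"
    by blast
qed

end

section \<open>Limits in L1\<close>

lemma nn_integral_le_of_AE_tendsto:
  fixes g :: "nat \<Rightarrow> 'a \<Rightarrow> real"
  assumes [measurable]: "\<And>j. g j \<in> borel_measurable M"
    and lim: "AE x in M. (\<lambda>j. g j x) \<longlonglongrightarrow> h x"
    and bound: "\<And>j. j \<ge> N \<Longrightarrow> (\<integral>\<^sup>+x. ennreal (g j x) \<partial>M) \<le> C"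
  shows "(\<integral>\<^sup>+x. ennreal (h x) \<partial>M) \<le> C"
proof -
  have "(\<integral>\<^sup>+x. ennreal (h x) \<partial>M) = (\<integral>\<^sup>+x. liminf (\<lambda>j. ennreal (g j x)) \<partial>M)"
    using lim by (intro nn_integral_cong_AE) (auto elim!: eventually_mono
        intro!: lim_imp_Liminf[symmetric] tendsto_ennrealI)
  also have "\<dots> \<le> liminf (\<lambda>j. \<integral>\<^sup>+x. ennreal (g j x) \<partial>M)"
    by (rule nn_integral_liminf) measurable
  also have "\<dots> \<le> limsup (\<lambda>j. \<integral>\<^sup>+x. ennreal (g j x) \<partial>M)"
    by (rule Liminf_le_Limsup) simp
  also have "\<dots> \<le> C"
    using bound by (intro Limsup_bounded) (auto simp: eventually_sequentially)
  finally show ?thesis .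
qed

lemma nn_integral_dist_le_of_L1_Cauchy:
  fixes f :: "nat \<Rightarrow> 'a \<Rightarrow> real"
  assumes f: "\<And>n. integrable M (f n)" and [measurable]: "Z \<in> borel_measurable M"
    and Cauchy: "\<And>m n. m \<ge> N \<Longrightarrow> n \<ge> N \<Longrightarrow> (\<integral>\<omega>. \<bar>f m \<omega> - f n \<omega>\<bar> \<partial>M) < e"
    and \<sigma>: "strict_mono \<sigma>" and AE_lim: "AE \<omega> in M. (\<lambda>k. f (\<sigma> k) \<omega>) \<longlonglongrightarrow> Z \<omega>" and "k \<ge> N"
  shows "(\<integral>\<^sup>+\<omega>. ennreal \<bar>f (\<sigma> k) \<omega> - Z \<omega>\<bar> \<partial>M) \<le> ennreal e"
proof (rule nn_integral_le_of_AE_tendsto[where N=N])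
  have [measurable]: "\<And>n. f n \<in> borel_measurable M" using f by simp
  show "(\<lambda>\<omega>. \<bar>f (\<sigma> k) \<omega> - f (\<sigma> j) \<omega>\<bar>) \<in> borel_measurable M" for j
    by measurable
  show "AE \<omega> in M. (\<lambda>j. \<bar>f (\<sigma> k) \<omega> - f (\<sigma> j) \<omega>\<bar>) \<longlonglongrightarrow> \<bar>f (\<sigma> k) \<omega> - Z \<omega>\<bar>"
    using AE_lim by eventually_elim (intro tendsto_intros)
  fix j assume "j \<ge> N"
  then have "(\<integral>\<omega>. \<bar>f (\<sigma> k) \<omega> - f (\<sigma> j) \<omega>\<bar> \<partial>M) < e"
    using Cauchy \<open>k \<ge> N\<close> seq_suble[OF \<sigma>] by (meson order_trans)
  then show "(\<integral>\<^sup>+\<omega>. ennreal \<bar>f (\<sigma> k) \<omega> - f (\<sigma> j) \<omega>\<bar> \<partial>M) \<le> ennreal e"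
    using f by (simp add: nn_integral_eq_integral ennreal_leI)
qed

lemma L1_Cauchy_AE_limit:
  fixes f :: "nat \<Rightarrow> 'a \<Rightarrow> real"
  assumes f: "\<And>n. integrable M (f n)"
    and Cauchy: "\<And>e. e > 0 \<Longrightarrow> \<exists>N. \<forall>m\<ge>N. \<forall>n\<ge>N. (\<integral>\<omega>. \<bar>f m \<omega> - f n \<omega>\<bar> \<partial>M) < e"
  obtains \<sigma> Z where "strict_mono \<sigma>" "integrable M Z" "AE \<omega> in M. (\<lambda>k. f (\<sigma> k) \<omega>) \<longlonglongrightarrow> Z \<omega>"
    "(\<lambda>k. \<integral>\<omega>. \<bar>f (\<sigma> k) \<omega> - Z \<omega>\<bar> \<partial>M) \<longlonglongrightarrow> 0"
proof -
  have [measurable]: "\<And>n. f n \<in> borel_measurable M" using f by simp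
  obtain \<sigma> where \<sigma>: "strict_mono \<sigma>" and "AE \<omega> in M. Cauchy (\<lambda>k. f (\<sigma> k) \<omega>)"
  proof (rule cauchy_L1_AE_cauchy_subseq[where s=f and M=M])
  qed (use f Cauchy in auto)
  define Z where "Z \<omega> = lim (\<lambda>k. f (\<sigma> k) \<omega>)" for \<omega>
  have Zm [measurable]: "Z \<in> borel_measurable M" unfolding Z_def by measurable
  have AE_lim: "AE \<omega> in M. (\<lambda>k. f (\<sigma> k) \<omega>) \<longlonglongrightarrow> Z \<omega>"
    using \<open>AE \<omega> in M. Cauchy (\<lambda>k. f (\<sigma> k) \<omega>)\<close>
    by eventually_elim (simp add: Z_def Cauchy_convergent_iff convergent_LIMSEQ_iff)
  have close: "\<exists>N. \<forall>k\<ge>N. (\<integral>\<^sup>+\<omega>. ennreal \<bar>f (\<sigma> k) \<omega> - Z \<omega>\<bar> \<partial>M) \<le> ennreal e" if e: "e > 0" for e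
  proof -
    obtain N where "\<And>m n. m \<ge> N \<Longrightarrow> n \<ge> N \<Longrightarrow> (\<integral>\<omega>. \<bar>f m \<omega> - f n \<omega>\<bar> \<partial>M) < e"
      using Cauchy[OF e] by blast
    then show ?thesis using nn_integral_dist_le_of_L1_Cauchy[OF f Zm _ \<sigma> AE_lim] by blast
  qed
  obtain N1 where "(\<integral>\<^sup>+\<omega>. ennreal \<bar>f (\<sigma> N1) \<omega> - Z \<omega>\<bar> \<partial>M) \<le> ennreal 1"
    using close[of 1] by auto
  then have "integrable M (\<lambda>\<omega>. f (\<sigma> N1) \<omega> - Z \<omega>)"
    by (intro integrableI_bounded) (auto intro: order.strict_trans1)
  then have "integrable M (\<lambda>\<omega>. f (\<sigma> N1) \<omega> - (f (\<sigma> N1) \<omega> - Z \<omega>))"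
    by (rule Bochner_Integration.integrable_diff[OF f])
  then have Z: "integrable M Z" by simp
  have "(\<lambda>k. \<integral>\<omega>. \<bar>f (\<sigma> k) \<omega> - Z \<omega>\<bar> \<partial>M) \<longlonglongrightarrow> 0"
  proof (rule LIMSEQ_I)
    fix e :: real assume "e > 0"
    then obtain N where N: "\<And>k. k \<ge> N \<Longrightarrow> (\<integral>\<^sup>+\<omega>. ennreal \<bar>f (\<sigma> k) \<omega> - Z \<omega>\<bar> \<partial>M) \<le> ennreal (e/2)"
      using close[of "e/2"] by auto
    have "(\<integral>\<omega>. \<bar>f (\<sigma> k) \<omega> - Z \<omega>\<bar> \<partial>M) \<le> e/2" if "k \<ge> N" for k
      using N[OF that] f Z \<open>e > 0\<close> by (simp add: nn_integral_eq_integral ennreal_le_iff)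
    then show "\<exists>N. \<forall>k\<ge>N. norm ((\<integral>\<omega>. \<bar>f (\<sigma> k) \<omega> - Z \<omega>\<bar> \<partial>M) - 0) < e"
      using \<open>e > 0\<close> by (intro exI[of _ N]) force
  qed
  then show ?thesis using that \<sigma> Z AE_lim by blast
qed

lemma L1_closureI:
  assumes "integrable M Z" "\<And>n. Y n \<in> Q" "(\<lambda>n. \<integral>\<omega>. \<bar>Y n \<omega> - Z \<omega>\<bar> \<partial>M) \<longlonglongrightarrow> 0"
  shows "Z \<in> L1_closure M Q"
  unfolding L1_closure_def
proof (intro CollectI conjI allI impI assms(1))
  fix e :: real assume "e > 0"
  then obtain n where "(\<integral>\<omega>. \<bar>Y n \<omega> - Z \<omega>\<bar> \<partial>M) < e"
    using order_tendstoD(2)[OF assms(3) \<open>e > 0\<close>] by (auto simp: eventually_sequentially)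
  moreover have "(\<integral>\<omega>. \<bar>Z \<omega> - Y n \<omega>\<bar> \<partial>M) = (\<integral>\<omega>. \<bar>Y n \<omega> - Z \<omega>\<bar> \<partial>M)"
    by (rule Bochner_Integration.integral_cong[OF refl abs_minus_commute])
  ultimately show "\<exists>Y\<in>Q. (\<integral>\<omega>. \<bar>Z \<omega> - Y \<omega>\<bar> \<partial>M) < e"
    using assms(2)[of n] by (intro bexI[of _ "Y n"]) auto
qed

lemma L1_closureE:
  assumes "Z \<in> L1_closure M Q"
  obtains Y where "\<And>n. Y n \<in> Q" "(\<lambda>n. \<integral>\<omega>. \<bar>Y n \<omega> - Z \<omega>\<bar> \<partial>M) \<longlonglongrightarrow> 0"
proof -
  have "\<forall>n. \<exists>Y\<in>Q. (\<integral>\<omega>. \<bar>Z \<omega> - Y \<omega>\<bar> \<partial>M) < 1 / real (Suc n)"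
    using assms unfolding L1_closure_def by auto
  then obtain Y where Y: "\<And>n. Y n \<in> Q" "\<And>n. (\<integral>\<omega>. \<bar>Z \<omega> - Y n \<omega>\<bar> \<partial>M) < 1 / real (Suc n)"
    by metis
  have "(\<lambda>n. \<integral>\<omega>. \<bar>Y n \<omega> - Z \<omega>\<bar> \<partial>M) \<longlonglongrightarrow> 0"
  proof (rule tendsto_sandwich[where f="\<lambda>_. 0" and h="\<lambda>n. 1 / real (Suc n)"])
    show "\<forall>\<^sub>F n in sequentially. (\<integral>\<omega>. \<bar>Y n \<omega> - Z \<omega>\<bar> \<partial>M) \<le> 1 / real (Suc n)"
      using Y(2) by (simp add: abs_minus_commute less_imp_le)
    show "(\<lambda>n. 1 / real (Suc n)) \<longlonglongrightarrow> 0"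
      using LIMSEQ_inverse_real_of_nat by (simp add: inverse_eq_divide)
  qed auto
  with Y(1) that show ?thesis by blast
qed

lemma integrable_of_AE_tendsto_L1_bounded:
  fixes f :: "nat \<Rightarrow> 'a \<Rightarrow> real"
  assumes f: "\<And>n. integrable M (f n)" and [measurable]: "g \<in> borel_measurable M"
    and lim: "AE \<omega> in M. (\<lambda>n. f n \<omega>) \<longlonglongrightarrow> g \<omega>" and bound: "\<And>n. (\<integral>\<omega>. \<bar>f n \<omega>\<bar> \<partial>M) \<le> B"
  shows "integrable M g"
proof (rule integrableI_bounded)
  have [measurable]: "\<And>n. f n \<in> borel_measurable M" using f by simp
  have "(\<integral>\<^sup>+\<omega>. ennreal \<bar>g \<omega>\<bar> \<partial>M) \<le> ennreal B"
  proof (rule nn_integral_le_of_AE_tendsto[where N=0])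
    show "AE \<omega> in M. (\<lambda>n. \<bar>f n \<omega>\<bar>) \<longlonglongrightarrow> \<bar>g \<omega>\<bar>"
      using lim by eventually_elim (rule tendsto_rabs)
    show "(\<integral>\<^sup>+\<omega>. ennreal \<bar>f n \<omega>\<bar> \<partial>M) \<le> ennreal B" for n
      using bound[of n] f by (simp add: nn_integral_eq_integral ennreal_leI)
  qed measurable
  then show "(\<integral>\<^sup>+\<omega>. ennreal (norm (g \<omega>)) \<partial>M) < \<infinity>"
    by (simp add: order.strict_trans1)
qed simp

lemma (in prob_space) densities_closed:
  assumes Y: "\<And>n. Y n \<in> densities M" and Z: "integrable M Z"
    and AE_lim: "AE \<omega> in M. (\<lambda>n. Y n \<omega>) \<longlonglongrightarrow> Z \<omega>"
    and L1_lim: "(\<lambda>n. \<integral>\<omega>. \<bar>Y n \<omega> - Z \<omega>\<bar> \<partial>M) \<longlonglongrightarrow> 0"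
  shows "Z \<in> densities M"
proof -
  have "AE \<omega> in M. \<forall>n. 0 \<le> Y n \<omega>" using Y by (simp add: densities_def AE_all_countable)
  then have "AE \<omega> in M. 0 \<le> Z \<omega>"
    using AE_lim by eventually_elim (auto intro: LIMSEQ_le_const)
  moreover have "(\<lambda>n. \<integral>\<omega>. Y n \<omega> \<partial>M) \<longlonglongrightarrow> (\<integral>\<omega>. Z \<omega> \<partial>M)"
  proof (rule tendsto_L1_int)
    show "(\<lambda>n. \<integral>\<^sup>+\<omega>. ennreal (norm (Y n \<omega> - Z \<omega>)) \<partial>M) \<longlonglongrightarrow> 0"
      using L1_lim Y Z
      by (simp add: densities_def nn_integral_eq_integral tendsto_ennrealI[where x=0, simplified])
  qed (use Y Z in \<open>auto simp: densities_def\<close>)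
  then have "(\<integral>\<omega>. Z \<omega> \<partial>M) = 1"
    using Y by (simp add: densities_def LIMSEQ_const_iff)
  ultimately show ?thesis using Z by (simp add: densities_def)
qed

section \<open>L1-Cauchy selections in decreasing convex families\<close>

lemma abs_le_add_square_div:
  fixes u e :: real
  assumes "e > 0"
  shows "\<bar>u\<bar> \<le> e + u^2 / e"
proof (cases "\<bar>u\<bar> \<le> e")
  case True
  moreover have "u^2 / e \<ge> 0" using assms by simp
  ultimately show ?thesis by linarith
next
  case False
  then have "\<bar>u\<bar> * e \<le> \<bar>u\<bar> * \<bar>u\<bar>" by (intro mult_left_mono) auto
  then have "\<bar>u\<bar> \<le> u^2 / e" using assms by (simp add: field_simps power2_eq_square)
  then show ?thesis using assms by linarith
qed

lemma reciprocal_midpoint_defect_eq: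
  fixes y z :: real
  assumes "0 \<le> y" "0 \<le> z"
  shows "1/(1+\<bar>y\<bar>)/2 + 1/(1+\<bar>z\<bar>)/2 - 1/(1+\<bar>(y+z)/2\<bar>) = (y-z)^2 / (2*(1+y)*(1+z)*(2+y+z))"
proof -
  define p q where "p = 1 + y" and "q = 1 + z"
  have "p > 0" "q > 0" unfolding p_def q_def using assms by auto
  have "1/(1+\<bar>y\<bar>)/2 + 1/(1+\<bar>z\<bar>)/2 - 1/(1+\<bar>(y+z)/2\<bar>) = 1/p/2 + 1/q/2 - 2/(p+q)"
    unfolding p_def q_def using assms by (simp add: field_simps)
  also have "\<dots> = ((p+q)^2 - 4*p*q) / (2*p*q*(p+q))"
    using \<open>p > 0\<close> \<open>q > 0\<close> by (simp add: field_simps power2_eq_square)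
  also have "(p+q)^2 - 4*p*q = (y-z)^2"
    unfolding p_def q_def by (simp add: power2_eq_square algebra_simps)
  finally show ?thesis unfolding p_def q_def by (simp add: algebra_simps)
qed

lemma abs_diff_le_reciprocal_defect:
  fixes y z c e :: real
  assumes "0 \<le> y" "0 \<le> z" "0 < c" "0 < e"
  shows "\<bar>y - z\<bar> \<le> e + 4*(1+c)^3/e * (1/(1+\<bar>y\<bar>)/2 + 1/(1+\<bar>z\<bar>)/2 - 1/(1+\<bar>(y+z)/2\<bar>))
           + (if \<bar>y\<bar> > c then \<bar>y\<bar> else 0) + (if \<bar>z\<bar> > c then \<bar>z\<bar> else 0)"
proof -
  define D where "D = 1/(1+\<bar>y\<bar>)/2 + 1/(1+\<bar>z\<bar>)/2 - 1/(1+\<bar>(y+z)/2\<bar>)"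
  have D_eq: "D = (y-z)^2 / (2*(1+y)*(1+z)*(2+y+z))"
    unfolding D_def using assms(1,2) by (rule reciprocal_midpoint_defect_eq)
  have "D \<ge> 0" unfolding D_eq using assms by simp
  show ?thesis
  proof (cases "y > c \<or> z > c")
    case True
    then have "\<bar>y - z\<bar> \<le> (if \<bar>y\<bar> > c then \<bar>y\<bar> else 0) + (if \<bar>z\<bar> > c then \<bar>z\<bar> else 0)"
      using assms by auto
    moreover have "4*(1+c)^3/e * D \<ge> 0" using \<open>D \<ge> 0\<close> assms by simp
    ultimately show ?thesis using assms unfolding D_def[symmetric] by linarith
  next
    case False
    \<comment> \<open>Below the cut-off the denominator of D is bounded, so D dominates (y - z)^2.\<close>
    have "(1+y)*(1+z)*(2+y+z) \<le> (1+c)*(1+c)*(2*(1+c))"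
      using False assms by (intro mult_mono) auto
    then have "2*(1+y)*(1+z)*(2+y+z) \<le> 4*(1+c)^3"
      by (simp add: power3_eq_cube algebra_simps)
    then have "D * (2*(1+y)*(1+z)*(2+y+z)) \<le> D * (4*(1+c)^3)"
      using \<open>D \<ge> 0\<close> by (rule mult_left_mono)
    moreover have "D * (2*(1+y)*(1+z)*(2+y+z)) = (y-z)^2"
      unfolding D_eq using assms by simp
    ultimately have "(y-z)^2/e \<le> 4*(1+c)^3/e * D"
      using assms by (simp add: divide_right_mono mult.commute)
    then show ?thesis
      using abs_le_add_square_div[OF \<open>e > 0\<close>, of "y - z"] unfolding D_def[symmetric] by auto
  qed
qed

definition recip_mean :: "'a measure \<Rightarrow> ('a \<Rightarrow> real) \<Rightarrow> real" where
  "recip_mean M Y = (\<integral>\<omega>. 1 / (1 + \<bar>Y \<omega>\<bar>) \<partial>M)"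

definition recip_defect :: "'a measure \<Rightarrow> ('a \<Rightarrow> real) \<Rightarrow> ('a \<Rightarrow> real) \<Rightarrow> real" where
  "recip_defect M Y Z = recip_mean M Y / 2 + recip_mean M Z / 2 - recip_mean M (\<lambda>\<omega>. (Y \<omega> + Z \<omega>) / 2)"

context prob_space
begin

lemma integrable_recip:
  fixes Y :: "'a \<Rightarrow> real"
  assumes [measurable]: "Y \<in> borel_measurable M"
  shows "integrable M (\<lambda>\<omega>. 1 / (1 + \<bar>Y \<omega>\<bar>))"
  by (rule integrable_const_bound[where B=1]) auto

lemma recip_mean_bounds:
  fixes Y :: "'a \<Rightarrow> real"
  assumes [measurable]: "Y \<in> borel_measurable M"
  shows "0 \<le> recip_mean M Y" "recip_mean M Y \<le> 1"
proof -
  show "0 \<le> recip_mean M Y" unfolding recip_mean_def by (rule integral_nonneg_AE) auto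
  have "recip_mean M Y \<le> (\<integral>\<omega>. 1 \<partial>M)" unfolding recip_mean_def
    by (rule integral_mono) (auto intro!: integrable_recip)
  then show "recip_mean M Y \<le> 1" by (simp add: prob_space)
qed

lemma L1_dist_le_recip_defect:
  fixes Y Z :: "'a \<Rightarrow> real"
  assumes Y: "integrable M Y" "AE \<omega> in M. 0 \<le> Y \<omega>" and Z: "integrable M Z" "AE \<omega> in M. 0 \<le> Z \<omega>"
    and c: "c > 0" and e: "e > 0"
  shows "(\<integral>\<omega>. \<bar>Y \<omega> - Z \<omega>\<bar> \<partial>M)
    \<le> e + 4*(1+c)^3/e * recip_defect M Y Z
      + (\<integral>\<omega>. (if \<bar>Y \<omega>\<bar> > c then \<bar>Y \<omega>\<bar> else 0) \<partial>M) + (\<integral>\<omega>. (if \<bar>Z \<omega>\<bar> > c then \<bar>Z \<omega>\<bar> else 0) \<partial>M)"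
proof -
  have [measurable]: "Y \<in> borel_measurable M" "Z \<in> borel_measurable M" using Y Z by auto
  define r where "r f \<omega> = 1 / (1 + \<bar>f \<omega>\<bar>)" for f :: "'a \<Rightarrow> real" and \<omega>
  have r: "integrable M (r f)" "(\<integral>\<omega>. r f \<omega> \<partial>M) = recip_mean M f" if "f \<in> borel_measurable M" for f
    unfolding r_def recip_mean_def using integrable_recip[OF that] by auto
  define D where "D \<omega> = r Y \<omega> / 2 + r Z \<omega> / 2 - r (\<lambda>\<omega>. (Y \<omega> + Z \<omega>) / 2) \<omega>" for \<omega>
  have D: "integrable M D"
    "(\<integral>\<omega>. D \<omega> \<partial>M) = recip_defect M Y Z"
    unfolding D_def recip_defect_def by (simp_all add: r)
  define T where "T y = (if \<bar>y\<bar> > c then \<bar>y\<bar> else 0)" for y :: real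
  have T: "integrable M (\<lambda>\<omega>. T (Y \<omega>))" "integrable M (\<lambda>\<omega>. T (Z \<omega>))"
    unfolding T_def using integrable_tail Y(1) Z(1) by auto
  have "(\<integral>\<omega>. \<bar>Y \<omega> - Z \<omega>\<bar> \<partial>M) \<le> (\<integral>\<omega>. e + 4*(1+c)^3/e * D \<omega> + T (Y \<omega>) + T (Z \<omega>) \<partial>M)"
  proof (rule integral_mono_AE)
    show "AE \<omega> in M. \<bar>Y \<omega> - Z \<omega>\<bar> \<le> e + 4*(1+c)^3/e * D \<omega> + T (Y \<omega>) + T (Z \<omega>)"
      using Y(2) Z(2) unfolding D_def T_def r_def
      by eventually_elim (rule abs_diff_le_reciprocal_defect[OF _ _ c e])
  qed (use Y Z D T in auto)
  also have "\<dots> = e + 4*(1+c)^3/e * (\<integral>\<omega>. D \<omega> \<partial>M) + (\<integral>\<omega>. T (Y \<omega>) \<partial>M) + (\<integral>\<omega>. T (Z \<omega>) \<partial>M)"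
    using D T by (simp add: prob_space)
  finally show ?thesis unfolding D(2) T_def .
qed

lemma L1_close_of_small_recip_defect:
  assumes UI: "unif_integrable M F" and nonneg: "\<And>Y. Y \<in> F \<Longrightarrow> AE \<omega> in M. 0 \<le> Y \<omega>"
    and "e > 0"
  shows "\<exists>\<eta>>0. \<forall>Y\<in>F. \<forall>Z\<in>F. recip_defect M Y Z < \<eta> \<longrightarrow> (\<integral>\<omega>. \<bar>Y \<omega> - Z \<omega>\<bar> \<partial>M) < e"
proof -
  obtain c0 where c0: "\<And>Y. Y \<in> F \<Longrightarrow> (\<integral>\<omega>. (if \<bar>Y \<omega>\<bar> > c0 then \<bar>Y \<omega>\<bar> else 0) \<partial>M) \<le> e/4"
    using UI \<open>e > 0\<close> unfolding unif_integrable_def by (meson divide_pos_pos zero_less_numeral)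
  define c where "c = max c0 1"
  have "c > 0" unfolding c_def by simp
  have tail: "(\<integral>\<omega>. (if \<bar>Y \<omega>\<bar> > c then \<bar>Y \<omega>\<bar> else 0) \<partial>M) \<le> e/4" if "Y \<in> F" for Y
  proof -
    have "integrable M Y" using UI that unfolding unif_integrable_def by blast
    then have "(\<integral>\<omega>. (if \<bar>Y \<omega>\<bar> > c then \<bar>Y \<omega>\<bar> else 0) \<partial>M)
        \<le> (\<integral>\<omega>. (if \<bar>Y \<omega>\<bar> > c0 then \<bar>Y \<omega>\<bar> else 0) \<partial>M)"
      unfolding c_def by (intro integral_mono integrable_tail) auto
    then show ?thesis using c0[OF that] by linarith
  qed
  define C where "C = 4*(1+c)^3/(e/4)"
  have "C > 0" unfolding C_def using \<open>c > 0\<close> \<open>e > 0\<close> by simp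
  define \<eta> where "\<eta> = e / (8 * C)"
  have "\<eta> > 0" unfolding \<eta>_def using \<open>C > 0\<close> \<open>e > 0\<close> by simp
  have "(\<integral>\<omega>. \<bar>Y \<omega> - Z \<omega>\<bar> \<partial>M) < e" if YZ: "Y \<in> F" "Z \<in> F" and small: "recip_defect M Y Z < \<eta>" for Y Z
  proof -
    have "integrable M Y" "integrable M Z" using UI YZ unfolding unif_integrable_def by auto
    then have "(\<integral>\<omega>. \<bar>Y \<omega> - Z \<omega>\<bar> \<partial>M)
        \<le> e/4 + C * recip_defect M Y Z
          + (\<integral>\<omega>. (if \<bar>Y \<omega>\<bar> > c then \<bar>Y \<omega>\<bar> else 0) \<partial>M) + (\<integral>\<omega>. (if \<bar>Z \<omega>\<bar> > c then \<bar>Z \<omega>\<bar> else 0) \<partial>M)"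
      unfolding C_def using nonneg YZ \<open>c > 0\<close> \<open>e > 0\<close> by (intro L1_dist_le_recip_defect) auto
    moreover have "C * recip_defect M Y Z < C * \<eta>"
      using small \<open>C > 0\<close> by simp
    moreover have "C * \<eta> = e/8" unfolding \<eta>_def using \<open>C > 0\<close> by simp
    ultimately show ?thesis using tail[OF YZ(1)] tail[OF YZ(2)] \<open>e > 0\<close> by linarith
  qed
  then show ?thesis using \<open>\<eta> > 0\<close> by blast
qed

lemma recip_defect_vanishes_on_near_minimisers:
  fixes K :: "nat \<Rightarrow> ('a \<Rightarrow> real) set"
  assumes meas: "\<And>n Y. Y \<in> K n \<Longrightarrow> Y \<in> borel_measurable M"
    and dec: "decseq K" and ne: "\<And>n. K n \<noteq> {}"
    and mid: "\<And>n Y Z. Y \<in> K n \<Longrightarrow> Z \<in> K n \<Longrightarrow> (\<lambda>\<omega>. (Y \<omega> + Z \<omega>) / 2) \<in> K n"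
  obtains Y where "\<And>n. Y n \<in> K n" "\<And>\<eta>. \<eta> > 0 \<Longrightarrow> \<exists>N. \<forall>n\<ge>N. \<forall>m\<ge>n. recip_defect M (Y n) (Y m) < \<eta>"
proof -
  define a where "a n = Inf (recip_mean M ` K n)" for n
  have bdd: "bdd_below (recip_mean M ` K n)" for n
    using recip_mean_bounds(1)[OF meas] by (auto intro!: bdd_belowI[of _ 0])
  have a_le: "a n \<le> recip_mean M Y" if "Y \<in> K n" for n Y
    unfolding a_def using bdd that by (auto intro: cInf_lower)
  have "incseq a"
    unfolding incseq_def a_def using ne bdd dec
    by (auto intro!: cInf_superset_mono image_mono simp: decseq_def) blast
  moreover have "a n \<le> 1" for n
    using ne[of n] a_le recip_mean_bounds(2)[OF meas] by (meson ex_in_conv order_trans)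
  ultimately have "a \<longlonglongrightarrow> (SUP n. a n)"
    by (intro LIMSEQ_incseq_SUP) (auto intro!: bdd_aboveI)
  then have "Cauchy a" by (rule LIMSEQ_imp_Cauchy)
  have "\<exists>Y. Y \<in> K n \<and> recip_mean M Y < a n + 1 / real (Suc n)" for n
    using cInf_lessD[of "recip_mean M ` K n" "a n + 1 / real (Suc n)"] ne unfolding a_def by auto
  then obtain Y where Y: "\<And>n. Y n \<in> K n" "\<And>n. recip_mean M (Y n) < a n + 1 / real (Suc n)"
    by metis
  \<comment> \<open>The midpoint of Y n and Y m lies in K n, so its recip_mean is at least a n.\<close>
  have defect: "recip_defect M (Y n) (Y m) < (a m - a n) / 2 + 1 / real (Suc n)" if "n \<le> m" for n m
  proof -
    have "Y m \<in> K n" using Y(1) dec that by (auto simp: decseq_def)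
    then have "a n \<le> recip_mean M (\<lambda>\<omega>. (Y n \<omega> + Y m \<omega>) / 2)"
      using Y(1) by (intro a_le mid)
    moreover have "1 / real (Suc m) \<le> 1 / real (Suc n)" using that by (simp add: frac_le)
    ultimately show ?thesis using Y(2)[of n] Y(2)[of m] unfolding recip_defect_def by argo
  qed
  have "\<exists>N. \<forall>n\<ge>N. \<forall>m\<ge>n. recip_defect M (Y n) (Y m) < \<eta>" if "\<eta> > 0" for \<eta>
  proof -
    obtain N1 where N1: "\<And>m n. m \<ge> N1 \<Longrightarrow> n \<ge> N1 \<Longrightarrow> \<bar>a m - a n\<bar> < \<eta>"
      using CauchyD[OF \<open>Cauchy a\<close> \<open>\<eta> > 0\<close>] by auto
    obtain N2 where N2: "1 / real (Suc N2) < \<eta> / 2"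
      using reals_Archimedean[of "\<eta> / 2"] \<open>\<eta> > 0\<close> by (auto simp: inverse_eq_divide)
    have "recip_defect M (Y n) (Y m) < \<eta>" if "max N1 N2 \<le> n" "n \<le> m" for n m
    proof -
      have "1 / real (Suc n) \<le> 1 / real (Suc N2)" using that by (simp add: frac_le)
      moreover have "\<bar>a m - a n\<bar> < \<eta>" using N1 that by auto
      ultimately show ?thesis using defect[OF that(2)] N2 by argo
    qed
    then show ?thesis by blast
  qed
  with Y(1) that show ?thesis by blast
qed

lemma L1_Cauchy_seq_in_decreasing_convex_sets:
  fixes K :: "nat \<Rightarrow> ('a \<Rightarrow> real) set"
  assumes UI: "unif_integrable M (K 0)" and nonneg: "\<And>Y. Y \<in> K 0 \<Longrightarrow> AE \<omega> in M. 0 \<le> Y \<omega>"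
    and dec: "decseq K" and ne: "\<And>n. K n \<noteq> {}"
    and mid: "\<And>n Y Z. Y \<in> K n \<Longrightarrow> Z \<in> K n \<Longrightarrow> (\<lambda>\<omega>. (Y \<omega> + Z \<omega>) / 2) \<in> K n"
  obtains Y where "\<And>n. Y n \<in> K n"
    "\<And>e. e > 0 \<Longrightarrow> \<exists>N. \<forall>m\<ge>N. \<forall>n\<ge>N. (\<integral>\<omega>. \<bar>Y m \<omega> - Y n \<omega>\<bar> \<partial>M) < e"
proof -
  have K0: "K n \<subseteq> K 0" for n using dec by (simp add: decseq_def)
  have meas: "Y \<in> borel_measurable M" if "Y \<in> K n" for Y n
    using UI K0 that unfolding unif_integrable_def by auto
  obtain Y where Y: "\<And>n. Y n \<in> K n"
    and defect: "\<And>\<eta>. \<eta> > 0 \<Longrightarrow> \<exists>N. \<forall>n\<ge>N. \<forall>m\<ge>n. recip_defect M (Y n) (Y m) < \<eta>"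
    using recip_defect_vanishes_on_near_minimisers[of K] meas dec ne mid by blast
  have "\<exists>N. \<forall>m\<ge>N. \<forall>n\<ge>N. (\<integral>\<omega>. \<bar>Y m \<omega> - Y n \<omega>\<bar> \<partial>M) < e" if "e > 0" for e
  proof -
    obtain \<eta> where "\<eta> > 0" and \<eta>: "\<And>Y Z. Y \<in> K 0 \<Longrightarrow> Z \<in> K 0 \<Longrightarrow> recip_defect M Y Z < \<eta> \<Longrightarrow>
        (\<integral>\<omega>. \<bar>Y \<omega> - Z \<omega>\<bar> \<partial>M) < e"
      using L1_close_of_small_recip_defect[OF UI nonneg \<open>e > 0\<close>] by blast
    obtain N where N: "\<And>n m. N \<le> n \<Longrightarrow> n \<le> m \<Longrightarrow> recip_defect M (Y n) (Y m) < \<eta>"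
      using defect[OF \<open>\<eta> > 0\<close>] by blast
    have close: "(\<integral>\<omega>. \<bar>Y n \<omega> - Y m \<omega>\<bar> \<partial>M) < e" if "N \<le> n" "n \<le> m" for n m
      using \<eta> Y K0 N[OF that] by blast
    have "(\<integral>\<omega>. \<bar>Y m \<omega> - Y n \<omega>\<bar> \<partial>M) < e" if "m \<ge> N" "n \<ge> N" for m n
      using close[of m n] close[of n m] that by (cases "m \<le> n") (auto simp: abs_minus_commute)
    then show ?thesis by blast
  qed
  with Y that show ?thesis by blast
qed

end

section \<open>Convex sets bounded away from the origin\<close>

lemma inner_ge_half_of_near_minimal_norm:
  fixes p x :: "'i \<Rightarrow> real" and I :: "'i set"
  assumes "0 < t" "0 \<le> m" "m \<le> (\<Sum>i\<in>I. (p i)^2)" "(\<Sum>i\<in>I. (p i)^2) < m + t * m / 2"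
    and "m \<le> (\<Sum>i\<in>I. (t * x i + (1 - t) * p i)^2)" and "t * (\<Sum>i\<in>I. (x i - p i)^2) \<le> m / 4"
  shows "m / 2 \<le> (\<Sum>i\<in>I. p i * x i)"
proof -
  define S1 where "S1 = (\<Sum>i\<in>I. p i * (x i - p i))"
  define S2 where "S2 = (\<Sum>i\<in>I. (x i - p i)^2)"
  have "(\<Sum>i\<in>I. (t * x i + (1 - t) * p i)^2) = (\<Sum>i\<in>I. (p i)^2 + 2 * t * (p i * (x i - p i)) + t^2 * (x i - p i)^2)"
    by (intro sum.cong) (auto simp: power2_eq_square algebra_simps)
  also have "\<dots> = (\<Sum>i\<in>I. (p i)^2) + 2 * t * S1 + t^2 * S2"
    by (simp add: sum.distrib sum_distrib_left S1_def S2_def)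
  finally have "t * (- m / 2) < t * (2 * S1 + t * S2)"
    using assms(4,5) by (simp add: algebra_simps power2_eq_square)
  then have "- m / 2 < 2 * S1 + t * S2" using mult_less_cancel_left_pos[OF assms(1)] by blast
  moreover have "(\<Sum>i\<in>I. p i * x i) = (\<Sum>i\<in>I. (p i)^2) + S1"
    by (simp add: S1_def sum.distrib[symmetric] power2_eq_square algebra_simps)
  ultimately show ?thesis using assms(2,3,6) unfolding S2_def by argo
qed

lemma uniformly_positive_functional_on_convex_set:
  fixes V :: "('i \<Rightarrow> real) set" and I :: "'i set"
  assumes "V \<noteq> {}"
    and convex: "\<And>x y t. x \<in> V \<Longrightarrow> y \<in> V \<Longrightarrow> 0 \<le> t \<Longrightarrow> t \<le> 1 \<Longrightarrow>
      \<exists>z\<in>V. \<forall>i\<in>I. z i = t * x i + (1 - t) * y i"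
    and bounded: "\<And>x i. x \<in> V \<Longrightarrow> i \<in> I \<Longrightarrow> \<bar>x i\<bar> \<le> B"
    and away: "\<And>x. x \<in> V \<Longrightarrow> \<delta> \<le> (\<Sum>i\<in>I. (x i)^2)" and "\<delta> > 0"
  obtains p m where "m > 0" "\<And>x. x \<in> V \<Longrightarrow> m \<le> (\<Sum>i\<in>I. p i * x i)"
proof -
  define N where "N x = (\<Sum>i\<in>I. (x i)^2)" for x :: "'i \<Rightarrow> real"
  define m where "m = Inf (N ` V)"
  have bdd: "bdd_below (N ` V)" unfolding N_def by (auto intro!: bdd_belowI[of _ 0] sum_nonneg)
  have m_le: "m \<le> N x" if "x \<in> V" for x unfolding m_def using bdd that by (auto intro: cInf_lower)
  have "\<delta> \<le> m" unfolding m_def N_def using \<open>V \<noteq> {}\<close> away by (intro cInf_greatest) auto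
  then have "m > 0" using \<open>\<delta> > 0\<close> by simp
  \<comment> \<open>Since V is bounded, the step t towards any other point of V can be chosen uniformly.\<close>
  define D where "D = 4 * real (card I) * B^2 + 1"
  have "D > 0" unfolding D_def by (simp add: add_nonneg_pos)
  define t where "t = min 1 (m / (4 * D))"
  have t: "0 < t" "t \<le> 1" "t \<le> m / (4 * D)" unfolding t_def using \<open>m > 0\<close> \<open>D > 0\<close> by auto
  obtain p where p: "p \<in> V" "N p < m + t * m / 2"
    using cInf_lessD[of "N ` V" "m + t * m / 2"] \<open>V \<noteq> {}\<close> t(1) \<open>m > 0\<close> unfolding m_def by auto
  have "m / 2 \<le> (\<Sum>i\<in>I. p i * x i)" if x: "x \<in> V" for x
  proof (rule inner_ge_half_of_near_minimal_norm)
    have "(x i - p i)^2 \<le> 4 * B^2" if "i \<in> I" for i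
    proof -
      have "\<bar>x i - p i\<bar> \<le> 2 * B" using bounded[OF x that] bounded[OF p(1) that] by linarith
      then have "\<bar>x i - p i\<bar>^2 \<le> (2 * B)^2" by (intro power_mono) auto
      then show ?thesis by (simp add: power_mult_distrib)
    qed
    then have "(\<Sum>i\<in>I. (x i - p i)^2) \<le> D"
      using sum_bounded_above[of I "\<lambda>i. (x i - p i)^2" "4 * B^2"] unfolding D_def by simp
    then have "t * (\<Sum>i\<in>I. (x i - p i)^2) \<le> m / (4 * D) * D"
      using t(1,3) \<open>m > 0\<close> \<open>D > 0\<close> by (intro mult_mono) (auto intro: sum_nonneg)
    then show "t * (\<Sum>i\<in>I. (x i - p i)^2) \<le> m / 4" using \<open>D > 0\<close> by simp
    obtain z where z: "z \<in> V" "\<And>i. i \<in> I \<Longrightarrow> z i = t * x i + (1 - t) * p i"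
      using convex[OF x p(1) less_imp_le[OF t(1)] t(2)] by blast
    then show "m \<le> (\<Sum>i\<in>I. (t * x i + (1 - t) * p i)^2)"
      using m_le[OF z(1)] unfolding N_def by (simp add: z(2) cong: sum.cong)
  qed (use t(1) \<open>m > 0\<close> m_le[OF p(1)] p(2) in \<open>auto simp: N_def\<close>)
  then show ?thesis using that[of "m / 2" p] \<open>m > 0\<close> by auto
qed

section \<open>The market\<close>

lemma neg_exp_eq_integral:
  fixes Z X :: "'a \<Rightarrow> real"
  assumes [measurable]: "Z \<in> borel_measurable M" "X \<in> borel_measurable M"
    and ZX: "integrable M (\<lambda>\<omega>. Z \<omega> * X \<omega>)" and Z: "AE \<omega> in M. 0 \<le> Z \<omega>"
  shows "neg_exp M Z X = ereal (- (\<integral>\<omega>. Z \<omega> * X \<omega> \<partial>M))"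
proof -
  have int: "integrable M (\<lambda>\<omega>. Z \<omega> * max (- X \<omega>) 0)" "integrable M (\<lambda>\<omega>. Z \<omega> * max (X \<omega>) 0)"
    by (auto intro!: Bochner_Integration.integrable_bound[OF ZX] AE_I2 mult_left_mono simp: abs_mult)
  have nn: "(\<integral>\<^sup>+\<omega>. ennreal (Z \<omega> * max (- X \<omega>) 0) \<partial>M) = ennreal (\<integral>\<omega>. Z \<omega> * max (- X \<omega>) 0 \<partial>M)"
    "(\<integral>\<^sup>+\<omega>. ennreal (Z \<omega> * max (X \<omega>) 0) \<partial>M) = ennreal (\<integral>\<omega>. Z \<omega> * max (X \<omega>) 0 \<partial>M)"
    using Z by (auto intro!: nn_integral_eq_integral int)
  have pos: "(\<integral>\<omega>. Z \<omega> * max (- X \<omega>) 0 \<partial>M) \<ge> 0" "(\<integral>\<omega>. Z \<omega> * max (X \<omega>) 0 \<partial>M) \<ge> 0"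
    using Z by (auto intro!: integral_nonneg_AE)
  have "(\<integral>\<omega>. Z \<omega> * max (- X \<omega>) 0 \<partial>M) - (\<integral>\<omega>. Z \<omega> * max (X \<omega>) 0 \<partial>M)
      = (\<integral>\<omega>. Z \<omega> * max (- X \<omega>) 0 - Z \<omega> * max (X \<omega>) 0 \<partial>M)"
    using int by simp
  also have "\<dots> = - (\<integral>\<omega>. Z \<omega> * X \<omega> \<partial>M)"
    by (subst integral_minus[symmetric], rule Bochner_Integration.integral_cong) (auto simp: max_def algebra_simps)
  finally show ?thesis
    unfolding neg_exp_def Let_def nn using pos by simp
qed

locale UI_market = prob_space M for M :: "'a measure" +
  fixes d :: nat and r :: real and R :: "nat \<Rightarrow> 'a \<Rightarrow> real" and Q :: "('a \<Rightarrow> real) set"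
  assumes integrable_R: "\<And>i. i \<in> {1..d} \<Longrightarrow> integrable M (R i)"
    and Q_densities: "Q \<subseteq> densities M"
    and Q_convex: "\<And>Y Z t. Y \<in> Q \<Longrightarrow> Z \<in> Q \<Longrightarrow> 0 \<le> t \<Longrightarrow> t \<le> 1 \<Longrightarrow> (\<lambda>\<omega>. t * Y \<omega> + (1 - t) * Z \<omega>) \<in> Q"
    and one_in_Q: "(\<lambda>_. 1) \<in> Q"
    and UI_Q: "unif_integrable M Q"
    and UI_RQ: "\<And>i. i \<in> {1..d} \<Longrightarrow> unif_integrable M ((\<lambda>Z \<omega>. R i \<omega> * Z \<omega>) ` Q)"
begin

definition mean_excess :: "nat \<Rightarrow> ('a \<Rightarrow> real) \<Rightarrow> real" where
  "mean_excess i Y = (\<integral>\<omega>. Y \<omega> * (R i \<omega> - r) \<partial>M)"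

definition portfolio_mean :: "(nat \<Rightarrow> real) \<Rightarrow> ('a \<Rightarrow> real) \<Rightarrow> real" where
  "portfolio_mean \<pi> Y = (\<Sum>i\<in>{1..d}. \<pi> i * mean_excess i Y)"

definition mean_excess_norm2 :: "('a \<Rightarrow> real) \<Rightarrow> real" where
  "mean_excess_norm2 Y = (\<Sum>i\<in>{1..d}. (mean_excess i Y)^2)"

lemma Q_density:
  assumes "Y \<in> Q"
  shows "integrable M Y" "AE \<omega> in M. 0 \<le> Y \<omega>" "(\<integral>\<omega>. Y \<omega> \<partial>M) = 1"
  using assms Q_densities unfolding densities_def by auto

lemma integrable_R_mult:
  assumes "Y \<in> Q" "i \<in> {1..d}"
  shows "integrable M (\<lambda>\<omega>. R i \<omega> * Y \<omega>)"
  using UI_RQ[OF assms(2)] assms(1) unfolding unif_integrable_def by auto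

lemma integrable_excess_mult:
  assumes "Y \<in> Q" "i \<in> {1..d}"
  shows "integrable M (\<lambda>\<omega>. Y \<omega> * (R i \<omega> - r))"
proof -
  have "integrable M (\<lambda>\<omega>. R i \<omega> * Y \<omega> - r * Y \<omega>)"
    using integrable_R_mult[OF assms] Q_density(1)[OF assms(1)] by auto
  then show ?thesis by (simp add: algebra_simps)
qed

lemma mean_excess_eq:
  assumes "Y \<in> densities M" "integrable M (\<lambda>\<omega>. R i \<omega> * Y \<omega>)"
  shows "mean_excess i Y = (\<integral>\<omega>. R i \<omega> * Y \<omega> \<partial>M) - r"
proof -
  have "mean_excess i Y = (\<integral>\<omega>. R i \<omega> * Y \<omega> - r * Y \<omega> \<partial>M)"
    unfolding mean_excess_def by (simp add: algebra_simps)
  also have "\<dots> = (\<integral>\<omega>. R i \<omega> * Y \<omega> \<partial>M) - r"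
    using assms by (simp add: densities_def)
  finally show ?thesis .
qed

lemma excess_L1_bounded: "\<exists>B. \<forall>Y\<in>Q. \<forall>i\<in>{1..d}. (\<integral>\<omega>. \<bar>Y \<omega> * (R i \<omega> - r)\<bar> \<partial>M) \<le> B"
proof -
  have "\<forall>i\<in>{1..d}. \<exists>B. \<forall>Y\<in>Q. (\<integral>\<omega>. \<bar>R i \<omega> * Y \<omega>\<bar> \<partial>M) \<le> B"
    using unif_integrable_L1_bounded[OF UI_RQ] by fastforce
  then obtain B where B: "\<And>i Y. i \<in> {1..d} \<Longrightarrow> Y \<in> Q \<Longrightarrow> (\<integral>\<omega>. \<bar>R i \<omega> * Y \<omega>\<bar> \<partial>M) \<le> B i"
    by metis
  have "(\<integral>\<omega>. \<bar>Y \<omega> * (R i \<omega> - r)\<bar> \<partial>M) \<le> (\<Sum>j\<in>{1..d}. \<bar>B j\<bar>) + \<bar>r\<bar>"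
    if Y: "Y \<in> Q" and i: "i \<in> {1..d}" for Y i
  proof -
    have "(\<integral>\<omega>. \<bar>Y \<omega> * (R i \<omega> - r)\<bar> \<partial>M) \<le> (\<integral>\<omega>. \<bar>R i \<omega> * Y \<omega>\<bar> + \<bar>r\<bar> * \<bar>Y \<omega>\<bar> \<partial>M)"
      using integrable_excess_mult[OF Y i] integrable_R_mult[OF Y i] Q_density(1)[OF Y]
      by (intro integral_mono) (auto simp: abs_mult[symmetric] abs_triangle_ineq4 algebra_simps)
    also have "\<dots> = (\<integral>\<omega>. \<bar>R i \<omega> * Y \<omega>\<bar> \<partial>M) + \<bar>r\<bar>"
    proof -
      have "(\<integral>\<omega>. \<bar>Y \<omega>\<bar> \<partial>M) = (\<integral>\<omega>. Y \<omega> \<partial>M)"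
        using Q_density(1,2)[OF Y] by (intro integral_cong_AE) auto
      then show ?thesis
        using integrable_R_mult[OF Y i] Q_density[OF Y] by simp
    qed
    also have "\<dots> \<le> (\<Sum>j\<in>{1..d}. \<bar>B j\<bar>) + \<bar>r\<bar>"
      using B[OF i Y] member_le_sum[of i "{1..d}" "\<lambda>j. \<bar>B j\<bar>"] i by simp
    finally show ?thesis .
  qed
  then show ?thesis by blast
qed

lemma mean_excess_convex:
  assumes "Y \<in> Q" "Z \<in> Q" "i \<in> {1..d}"
  shows "mean_excess i (\<lambda>\<omega>. t * Y \<omega> + (1 - t) * Z \<omega>) = t * mean_excess i Y + (1 - t) * mean_excess i Z"
proof -
  have "mean_excess i (\<lambda>\<omega>. t * Y \<omega> + (1 - t) * Z \<omega>) =
      (\<integral>\<omega>. t * (Y \<omega> * (R i \<omega> - r)) + (1 - t) * (Z \<omega> * (R i \<omega> - r)) \<partial>M)"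
    unfolding mean_excess_def by (simp add: algebra_simps)
  also have "\<dots> = t * mean_excess i Y + (1 - t) * mean_excess i Z"
    unfolding mean_excess_def using integrable_excess_mult[OF assms(1,3)] integrable_excess_mult[OF assms(2,3)]
    by simp
  finally show ?thesis .
qed

lemma integral_mult_excess:
  assumes "Y \<in> Q"
  shows "integrable M (\<lambda>\<omega>. Y \<omega> * excess d r R \<pi> \<omega>)"
    and "(\<integral>\<omega>. Y \<omega> * excess d r R \<pi> \<omega> \<partial>M) = portfolio_mean \<pi> Y"
proof -
  have eq: "(\<lambda>\<omega>. Y \<omega> * excess d r R \<pi> \<omega>) = (\<lambda>\<omega>. \<Sum>i\<in>{1..d}. \<pi> i * (Y \<omega> * (R i \<omega> - r)))"
    unfolding excess_def by (auto simp: sum_distrib_left algebra_simps)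
  show "integrable M (\<lambda>\<omega>. Y \<omega> * excess d r R \<pi> \<omega>)"
    unfolding eq using integrable_excess_mult[OF assms] by auto
  show "(\<integral>\<omega>. Y \<omega> * excess d r R \<pi> \<omega> \<partial>M) = portfolio_mean \<pi> Y"
    unfolding eq portfolio_mean_def mean_excess_def using integrable_excess_mult[OF assms]
    by (subst Bochner_Integration.integral_sum) auto
qed

lemma expectation_excess: "(\<integral>\<omega>. excess d r R \<pi> \<omega> \<partial>M) = portfolio_mean \<pi> (\<lambda>_. 1)"
  using integral_mult_excess(2)[OF one_in_Q] by simp

lemma rho_excess: "rho M Q (excess d r R \<pi>) = (SUP Y\<in>Q. ereal (- portfolio_mean \<pi> Y))"
proof -
  have "excess d r R \<pi> \<in> borel_measurable M"
    unfolding excess_def using integrable_R by (intro borel_measurable_sum) auto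
  then have "neg_exp M Y (excess d r R \<pi>) = ereal (- portfolio_mean \<pi> Y)" if "Y \<in> Q" for Y
    using Q_density(1,2)[OF that] integral_mult_excess[OF that]
    by (subst neg_exp_eq_integral) auto
  then show ?thesis unfolding rho_def by (intro SUP_cong) auto
qed

lemma mean_excess_bounded: "\<exists>B. \<forall>Y\<in>Q. \<forall>i\<in>{1..d}. \<bar>mean_excess i Y\<bar> \<le> B"
proof -
  obtain B where B: "\<And>Y i. Y \<in> Q \<Longrightarrow> i \<in> {1..d} \<Longrightarrow> (\<integral>\<omega>. \<bar>Y \<omega> * (R i \<omega> - r)\<bar> \<partial>M) \<le> B"
    using excess_L1_bounded by blast
  have "\<bar>mean_excess i Y\<bar> \<le> B" if "Y \<in> Q" "i \<in> {1..d}" for Y i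
    unfolding mean_excess_def using integral_abs_bound B[OF that] by (rule order_trans)
  then show ?thesis by blast
qed

lemma portfolio_mean_bounded: "\<exists>K. \<forall>Y\<in>Q. \<bar>portfolio_mean \<pi> Y\<bar> \<le> K"
proof -
  obtain B where B: "\<And>Y i. Y \<in> Q \<Longrightarrow> i \<in> {1..d} \<Longrightarrow> \<bar>mean_excess i Y\<bar> \<le> B"
    using mean_excess_bounded by blast
  have "\<bar>portfolio_mean \<pi> Y\<bar> \<le> (\<Sum>i\<in>{1..d}. \<bar>\<pi> i\<bar> * B)" if "Y \<in> Q" for Y
  proof -
    have "\<bar>portfolio_mean \<pi> Y\<bar> \<le> (\<Sum>i\<in>{1..d}. \<bar>\<pi> i * mean_excess i Y\<bar>)"
      unfolding portfolio_mean_def by (rule sum_abs)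
    also have "\<dots> \<le> (\<Sum>i\<in>{1..d}. \<bar>\<pi> i\<bar> * B)"
      using B[OF that] by (intro sum_mono) (auto simp: abs_mult intro!: mult_left_mono)
    finally show ?thesis .
  qed
  then show ?thesis by blast
qed

lemma strong_arbitrage_of_uniform_gain:
  assumes "m > 0" and gain: "\<And>Y. Y \<in> Q \<Longrightarrow> m \<le> portfolio_mean \<pi>\<^sub>0 Y"
  shows "strong_rho_arbitrage M Q d r R"
  unfolding strong_rho_arbitrage_def
proof
  fix \<pi> :: "nat \<Rightarrow> real"
  define \<pi>' where "\<pi>' i = \<pi> i + \<pi>\<^sub>0 i" for i
  have shift: "portfolio_mean \<pi>' Y = portfolio_mean \<pi> Y + portfolio_mean \<pi>\<^sub>0 Y" for Y
    unfolding portfolio_mean_def \<pi>'_def by (simp add: sum.distrib algebra_simps)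
  have "(\<integral>\<omega>. excess d r R \<pi>' \<omega> \<partial>M) > (\<integral>\<omega>. excess d r R \<pi> \<omega> \<partial>M)"
    unfolding expectation_excess shift using gain[OF one_in_Q] \<open>m > 0\<close> by simp
  moreover have "rho M Q (excess d r R \<pi>') < rho M Q (excess d r R \<pi>)"
  proof -
    \<comment> \<open>rho of the original position is finite, and adding the gain lowers it by at least m.\<close>
    obtain K where K: "\<And>Y. Y \<in> Q \<Longrightarrow> \<bar>portfolio_mean \<pi> Y\<bar> \<le> K"
      using portfolio_mean_bounded by blast
    define s where "s = (SUP Y\<in>Q. ereal (- portfolio_mean \<pi> Y))"
    have "s \<le> ereal K" unfolding s_def using K by (intro SUP_least) (auto simp: abs_le_iff)
    moreover have "ereal (- portfolio_mean \<pi> (\<lambda>_. 1)) \<le> s"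
      unfolding s_def using one_in_Q by (intro SUP_upper) auto
    ultimately obtain q where q: "s = ereal q" by (cases s) auto
    have "(SUP Y\<in>Q. ereal (- portfolio_mean \<pi>' Y)) \<le> ereal (q - m)"
    proof (rule SUP_least)
      fix Y assume "Y \<in> Q"
      then have "ereal (- portfolio_mean \<pi> Y) \<le> ereal q"
        unfolding q[symmetric] s_def by (intro SUP_upper)
      then show "ereal (- portfolio_mean \<pi>' Y) \<le> ereal (q - m)"
        using gain[OF \<open>Y \<in> Q\<close>] unfolding shift by simp
    qed
    also have "\<dots> < ereal q" using \<open>m > 0\<close> by simp
    finally show ?thesis unfolding rho_excess using q s_def by simp
  qed
  ultimately show "\<exists>\<pi>'. (\<integral>\<omega>. excess d r R \<pi>' \<omega> \<partial>M) > (\<integral>\<omega>. excess d r R \<pi> \<omega> \<partial>M) \<and>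
      rho M Q (excess d r R \<pi>') < rho M Q (excess d r R \<pi>)"
    by blast
qed

lemma mean_excess_tendsto:
  assumes Y: "\<And>n. Y n \<in> Q" and Z: "Z \<in> densities M" "integrable M (\<lambda>\<omega>. Z \<omega> * (R i \<omega> - r))"
    and i: "i \<in> {1..d}" and lim: "(\<lambda>n. \<integral>\<omega>. \<bar>Y n \<omega> - Z \<omega>\<bar> \<partial>M) \<longlonglongrightarrow> 0"
  shows "(\<lambda>n. mean_excess i (Y n)) \<longlonglongrightarrow> mean_excess i Z"
proof -
  have Zi: "integrable M Z" using Z(1) by (simp add: densities_def)
  have "integrable M (\<lambda>\<omega>. Z \<omega> * (R i \<omega> - r) + r * Z \<omega>)" using Z(2) Zi by simp
  then have RZ: "integrable M (\<lambda>\<omega>. R i \<omega> * Z \<omega>)" by (simp add: algebra_simps)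
  have "range (\<lambda>n \<omega>. R i \<omega> * Y n \<omega>) \<subseteq> (\<lambda>Z \<omega>. R i \<omega> * Z \<omega>) ` Q" using Y by auto
  then have "(\<lambda>n. \<integral>\<omega>. R i \<omega> * Y n \<omega> \<partial>M) \<longlonglongrightarrow> (\<integral>\<omega>. R i \<omega> * Z \<omega> \<partial>M)"
    using integrable_R[OF i] Zi RZ Q_density(1)[OF Y] unif_integrable_subset[OF UI_RQ[OF i]] lim
    by (intro integral_mult_tendsto_of_L1_tendsto) auto
  then have "(\<lambda>n. (\<integral>\<omega>. R i \<omega> * Y n \<omega> \<partial>M) - r) \<longlonglongrightarrow> (\<integral>\<omega>. R i \<omega> * Z \<omega> \<partial>M) - r"
    by (intro tendsto_diff tendsto_const)
  moreover have "mean_excess i (Y n) = (\<integral>\<omega>. R i \<omega> * Y n \<omega> \<partial>M) - r" for n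
    using Y Q_densities integrable_R_mult[OF Y i] by (intro mean_excess_eq) auto
  ultimately show ?thesis using mean_excess_eq[OF Z(1) RZ] by simp
qed

lemma no_strong_arbitrage_if_closure_meets_mart:
  assumes "Z \<in> L1_closure M Q" "Z \<in> mart_densities M d r R"
  shows "\<not> strong_rho_arbitrage M Q d r R"
proof
  assume "strong_rho_arbitrage M Q d r R"
  then obtain \<pi> where "rho M Q (excess d r R \<pi>) < rho M Q (excess d r R (\<lambda>_. 0))"
    unfolding strong_rho_arbitrage_def by blast
  moreover have "rho M Q (excess d r R (\<lambda>_. 0)) = 0"
  proof -
    have "Q \<noteq> {}" using one_in_Q by blast
    then show ?thesis unfolding rho_excess portfolio_mean_def by (simp add: zero_ereal_def)
  qed
  \<comment> \<open>Along densities Y n approaching Z the mean excess returns tend to those under Z,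
    which vanish.\<close>
  moreover have "0 \<le> rho M Q (excess d r R \<pi>)"
  proof -
    obtain Y where Y: "\<And>n. Y n \<in> Q" and lim: "(\<lambda>n. \<integral>\<omega>. \<bar>Y n \<omega> - Z \<omega>\<bar> \<partial>M) \<longlonglongrightarrow> 0"
      using L1_closureE[OF assms(1)] by blast
    have "(\<lambda>n. mean_excess i (Y n)) \<longlonglongrightarrow> 0" if "i \<in> {1..d}" for i
      using mean_excess_tendsto[OF Y _ _ that lim] assms(2) that
      unfolding mart_densities_def mean_excess_def by auto
    then have "(\<lambda>n. - portfolio_mean \<pi> (Y n)) \<longlonglongrightarrow> - (\<Sum>i\<in>{1..d}. \<pi> i * 0)"
      unfolding portfolio_mean_def by (intro tendsto_intros) auto
    then have lim_ereal: "(\<lambda>n. ereal (- portfolio_mean \<pi> (Y n))) \<longlonglongrightarrow> ereal 0"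
      by (intro tendsto_ereal) simp
    have "ereal (- portfolio_mean \<pi> (Y n)) \<le> rho M Q (excess d r R \<pi>)" for n
      unfolding rho_excess using Y by (intro SUP_upper) auto
    then have "ereal 0 \<le> rho M Q (excess d r R \<pi>)"
      by (intro LIMSEQ_le_const2[OF lim_ereal]) blast
    then show ?thesis by (simp add: zero_ereal_def)
  qed
  ultimately show False by simp
qed

lemma Q_midpoint:
  assumes "Y \<in> Q" "Z \<in> Q"
  shows "(\<lambda>\<omega>. (Y \<omega> + Z \<omega>) / 2) \<in> Q"
    and "mean_excess_norm2 (\<lambda>\<omega>. (Y \<omega> + Z \<omega>) / 2) \<le> mean_excess_norm2 Y / 2 + mean_excess_norm2 Z / 2"
proof -
  have mid: "(\<lambda>\<omega>. (Y \<omega> + Z \<omega>) / 2) = (\<lambda>\<omega>. 1/2 * Y \<omega> + (1 - 1/2) * Z \<omega>)" by auto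
  show "(\<lambda>\<omega>. (Y \<omega> + Z \<omega>) / 2) \<in> Q" unfolding mid using assms by (intro Q_convex) auto
  have "(mean_excess i (\<lambda>\<omega>. (Y \<omega> + Z \<omega>) / 2))^2 \<le> (mean_excess i Y)^2 / 2 + (mean_excess i Z)^2 / 2"
    if "i \<in> {1..d}" for i
  proof -
    have "0 \<le> (mean_excess i Y - mean_excess i Z)^2" by simp
    then show ?thesis
      unfolding mid mean_excess_convex[OF assms that] by (simp add: power2_eq_square algebra_simps)
  qed
  then have "mean_excess_norm2 (\<lambda>\<omega>. (Y \<omega> + Z \<omega>) / 2)
      \<le> (\<Sum>i\<in>{1..d}. (mean_excess i Y)^2 / 2 + (mean_excess i Z)^2 / 2)"
    unfolding mean_excess_norm2_def by (rule sum_mono)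
  then show "mean_excess_norm2 (\<lambda>\<omega>. (Y \<omega> + Z \<omega>) / 2) \<le> mean_excess_norm2 Y / 2 + mean_excess_norm2 Z / 2"
    unfolding mean_excess_norm2_def by (simp add: sum.distrib sum_divide_distrib)
qed

lemma integrable_excess_mult_of_AE_limit:
  assumes Y: "\<And>k. Y k \<in> Q" and "integrable M Z" and AE_lim: "AE \<omega> in M. (\<lambda>k. Y k \<omega>) \<longlonglongrightarrow> Z \<omega>"
    and i: "i \<in> {1..d}"
  shows "integrable M (\<lambda>\<omega>. Z \<omega> * (R i \<omega> - r))"
proof -
  obtain B where B: "\<And>Y. Y \<in> Q \<Longrightarrow> (\<integral>\<omega>. \<bar>Y \<omega> * (R i \<omega> - r)\<bar> \<partial>M) \<le> B"
    using excess_L1_bounded i by blast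
  have [measurable]: "R i \<in> borel_measurable M" "Z \<in> borel_measurable M"
    using integrable_R[OF i] \<open>integrable M Z\<close> by auto
  show ?thesis
  proof (rule integrable_of_AE_tendsto_L1_bounded[where f="\<lambda>k \<omega>. Y k \<omega> * (R i \<omega> - r)" and B=B])
    show "integrable M (\<lambda>\<omega>. Y k \<omega> * (R i \<omega> - r))" for k
      by (rule integrable_excess_mult[OF Y i])
    show "(\<integral>\<omega>. \<bar>Y k \<omega> * (R i \<omega> - r)\<bar> \<partial>M) \<le> B" for k
      by (rule B[OF Y])
    show "(\<lambda>\<omega>. Z \<omega> * (R i \<omega> - r)) \<in> borel_measurable M"
      by measurable
    show "AE \<omega> in M. (\<lambda>k. Y k \<omega> * (R i \<omega> - r)) \<longlonglongrightarrow> Z \<omega> * (R i \<omega> - r)"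
      using AE_lim by eventually_elim (intro tendsto_mult tendsto_const)
  qed
qed

lemma mart_density_of_limit:
  assumes Y: "\<And>k. Y k \<in> Q" and Z: "integrable M Z"
    and AE_lim: "AE \<omega> in M. (\<lambda>k. Y k \<omega>) \<longlonglongrightarrow> Z \<omega>"
    and L1_lim: "(\<lambda>k. \<integral>\<omega>. \<bar>Y k \<omega> - Z \<omega>\<bar> \<partial>M) \<longlonglongrightarrow> 0"
    and norm2_lim: "(\<lambda>k. mean_excess_norm2 (Y k)) \<longlonglongrightarrow> 0"
  shows "Z \<in> mart_densities M d r R"
proof -
  have "Z \<in> densities M"
    using densities_closed[OF _ Z AE_lim L1_lim] Y Q_densities by auto
  moreover have "integrable M (\<lambda>\<omega>. Z \<omega> * (R i \<omega> - r)) \<and> mean_excess i Z = 0" if i: "i \<in> {1..d}" for i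
  proof
    show ZR: "integrable M (\<lambda>\<omega>. Z \<omega> * (R i \<omega> - r))"
      by (rule integrable_excess_mult_of_AE_limit[OF Y Z AE_lim i])
    have "(\<lambda>k. (mean_excess i (Y k))^2) \<longlonglongrightarrow> (mean_excess i Z)^2"
      using mean_excess_tendsto[OF Y \<open>Z \<in> densities M\<close> ZR i L1_lim] by (rule tendsto_power)
    moreover have "(mean_excess i (Y k))^2 \<le> mean_excess_norm2 (Y k)" for k
      unfolding mean_excess_norm2_def using i by (intro member_le_sum) auto
    ultimately have "(mean_excess i Z)^2 \<le> 0"
      using norm2_lim by (intro LIMSEQ_le) auto
    then show "mean_excess i Z = 0" by simp
  qed
  ultimately show ?thesis unfolding mart_densities_def mean_excess_def by blast
qed

lemma closure_meets_mart_if_inf_mean_excess_norm2_zero: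
  assumes small: "\<And>\<delta>. \<delta> > 0 \<Longrightarrow> \<exists>Y\<in>Q. mean_excess_norm2 Y \<le> \<delta>"
  shows "L1_closure M Q \<inter> mart_densities M d r R \<noteq> {}"
proof -
  define K where "K n = {Y\<in>Q. mean_excess_norm2 Y \<le> 1 / real (Suc n)}" for n
  have UI: "unif_integrable M (K 0)" using unif_integrable_subset[OF UI_Q] unfolding K_def by auto
  have nonneg: "AE \<omega> in M. 0 \<le> Y \<omega>" if "Y \<in> K 0" for Y
    using that Q_density(2) unfolding K_def by auto
  have dec: "decseq K"
    unfolding decseq_def K_def by (auto intro: order_trans[OF _ frac_le])
  have ne: "K n \<noteq> {}" for n
    using small[of "1 / real (Suc n)"] unfolding K_def by auto
  have mid: "(\<lambda>\<omega>. (Y \<omega> + Z \<omega>) / 2) \<in> K n" if "Y \<in> K n" "Z \<in> K n" for n Y Z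
    using that Q_midpoint[of Y Z] unfolding K_def by auto
  obtain Y where Y: "\<And>n. Y n \<in> K n"
    and Cauchy: "\<And>e. e > 0 \<Longrightarrow> \<exists>N. \<forall>m\<ge>N. \<forall>n\<ge>N. (\<integral>\<omega>. \<bar>Y m \<omega> - Y n \<omega>\<bar> \<partial>M) < e"
    using L1_Cauchy_seq_in_decreasing_convex_sets[OF UI nonneg dec ne mid] by blast
  have YQ: "Y n \<in> Q" for n using Y unfolding K_def by auto
  obtain \<sigma> Z where "strict_mono \<sigma>" "integrable M Z" and AE_lim: "AE \<omega> in M. (\<lambda>k. Y (\<sigma> k) \<omega>) \<longlonglongrightarrow> Z \<omega>"
    and L1_lim: "(\<lambda>k. \<integral>\<omega>. \<bar>Y (\<sigma> k) \<omega> - Z \<omega>\<bar> \<partial>M) \<longlonglongrightarrow> 0"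
    using L1_Cauchy_AE_limit[OF Q_density(1)[OF YQ] Cauchy] by blast
  have "(\<lambda>k. mean_excess_norm2 (Y (\<sigma> k))) \<longlonglongrightarrow> 0"
  proof (rule tendsto_sandwich[where f="\<lambda>_. 0" and h="\<lambda>k. 1 / real (Suc k)"])
    have "mean_excess_norm2 (Y (\<sigma> k)) \<le> 1 / real (Suc (\<sigma> k))" for k
      using Y unfolding K_def by auto
    also have "1 / real (Suc (\<sigma> k)) \<le> 1 / real (Suc k)" for k
      using seq_suble[OF \<open>strict_mono \<sigma>\<close>] by (simp add: frac_le)
    finally show "\<forall>\<^sub>F k in sequentially. mean_excess_norm2 (Y (\<sigma> k)) \<le> 1 / real (Suc k)"
      by simp
    show "(\<lambda>k. 1 / real (Suc k)) \<longlonglongrightarrow> 0"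
      using LIMSEQ_inverse_real_of_nat by (simp add: inverse_eq_divide)
    show "\<forall>\<^sub>F k in sequentially. 0 \<le> mean_excess_norm2 (Y (\<sigma> k))"
      by (intro always_eventually allI) (simp add: mean_excess_norm2_def sum_nonneg)
  qed simp
  then have "Z \<in> mart_densities M d r R"
    using mart_density_of_limit[OF YQ \<open>integrable M Z\<close> AE_lim L1_lim] by blast
  moreover have "Z \<in> L1_closure M Q"
    using L1_closureI[OF \<open>integrable M Z\<close> YQ L1_lim] .
  ultimately show ?thesis by blast
qed

lemma strong_arbitrage_if_mean_excess_norm2_bounded_away:
  assumes "\<delta> > 0" "\<And>Y. Y \<in> Q \<Longrightarrow> \<delta> \<le> mean_excess_norm2 Y"
  shows "strong_rho_arbitrage M Q d r R"
proof -
  define V where "V = (\<lambda>Y i. mean_excess i Y) ` Q"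
  obtain B where bounded: "\<And>x i. x \<in> V \<Longrightarrow> i \<in> {1..d} \<Longrightarrow> \<bar>x i\<bar> \<le> B"
    using mean_excess_bounded unfolding V_def by blast
  have convex: "\<exists>z\<in>V. \<forall>i\<in>{1..d}. z i = t * x i + (1 - t) * y i"
    if xy: "x \<in> V" "y \<in> V" and t: "0 \<le> t" "t \<le> 1" for x y t
  proof -
    obtain Y Z where YZ: "Y \<in> Q" "Z \<in> Q" and "x = (\<lambda>i. mean_excess i Y)" "y = (\<lambda>i. mean_excess i Z)"
      using xy unfolding V_def by blast
    then have "\<forall>i\<in>{1..d}. mean_excess i (\<lambda>\<omega>. t * Y \<omega> + (1 - t) * Z \<omega>) = t * x i + (1 - t) * y i"
      using mean_excess_convex[OF YZ] by simp
    moreover have "(\<lambda>i. mean_excess i (\<lambda>\<omega>. t * Y \<omega> + (1 - t) * Z \<omega>)) \<in> V"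
      unfolding V_def using Q_convex[OF YZ t] by blast
    ultimately show ?thesis
      by (intro bexI[where x="\<lambda>i. mean_excess i (\<lambda>\<omega>. t * Y \<omega> + (1 - t) * Z \<omega>)"]) simp_all
  qed
  have away: "\<delta> \<le> (\<Sum>i\<in>{1..d}. (x i)^2)" if "x \<in> V" for x
    using that assms(2) unfolding V_def mean_excess_norm2_def by auto
  have "V \<noteq> {}" unfolding V_def using one_in_Q by blast
  obtain p m where "m > 0" and gain: "\<And>x. x \<in> V \<Longrightarrow> m \<le> (\<Sum>i\<in>{1..d}. p i * x i)"
  proof (rule uniformly_positive_functional_on_convex_set[of V "{1..d}" B \<delta>])
  qed (use convex bounded away \<open>\<delta> > 0\<close> \<open>V \<noteq> {}\<close> in blast)+
  then show ?thesis
    by (intro strong_arbitrage_of_uniform_gain[where \<pi>\<^sub>0=p]) (auto simp: portfolio_mean_def V_def)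
qed

end

theorem theorem4p15:
  fixes M :: "'a measure" and d :: nat and r :: real
    and S0 :: "nat \<Rightarrow> real" and S1 :: "nat \<Rightarrow> 'a \<Rightarrow> real"
    and Q :: "('a \<Rightarrow> real) set"
  assumes "prob_space M"
    and "r > -1"
    and "\<forall>i\<in>{1..d}. S0 i > 0"
    and "\<forall>i\<in>{1..d}. S1 i \<in> borel_measurable M"
    and "nonredundant M d r S0 S1"
    and "\<forall>i\<in>{1..d}. integrable M (ret S0 S1 i)"
    and "\<exists>i\<in>{1..d}. (\<integral>\<omega>. ret S0 S1 i \<omega> \<partial>M) \<noteq> r"
    and "Q \<subseteq> densities M"
    and "\<forall>Y\<in>Q. \<forall>Z\<in>Q. \<forall>t::real. 0 \<le> t \<and> t \<le> 1 \<longrightarrow> (\<lambda>\<omega>. t * Y \<omega> + (1 - t) * Z \<omega>) \<in> Q"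
    and "(\<lambda>_. 1) \<in> Q"
    and "unif_integrable M Q"
    and "\<forall>i\<in>{1..d}. unif_integrable M ((\<lambda>Z \<omega>. ret S0 S1 i \<omega> * Z \<omega>) ` Q)"
  shows "\<not> strong_rho_arbitrage M Q d r (ret S0 S1)
         \<longleftrightarrow> L1_closure M Q \<inter> mart_densities M d r (ret S0 S1) \<noteq> {}"
proof -
  interpret UI_market M d r "ret S0 S1" Q
    unfolding UI_market_def UI_market_axioms_def using assms by auto
  show ?thesis
  proof
    assume no_arbitrage: "\<not> strong_rho_arbitrage M Q d r (ret S0 S1)"
    show "L1_closure M Q \<inter> mart_densities M d r (ret S0 S1) \<noteq> {}"
    proof (cases "\<forall>\<delta>>0. \<exists>Y\<in>Q. mean_excess_norm2 Y \<le> \<delta>")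
      case True
      then show ?thesis by (intro closure_meets_mart_if_inf_mean_excess_norm2_zero) auto
    next
      case False
      then obtain \<delta> where "\<delta> > 0" "\<And>Y. Y \<in> Q \<Longrightarrow> \<delta> \<le> mean_excess_norm2 Y"
        by (auto simp: not_le less_imp_le)
      then show ?thesis
        using strong_arbitrage_if_mean_excess_norm2_bounded_away no_arbitrage by blast
    qed
  qed (use no_strong_arbitrage_if_closure_meets_mart in blast)
qed

end
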